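(* Let $(\mathcal A,\mathcal B)$ be a nice $(\theta,\theta)$ pair and let $\mathcal R$ be a partial order with the $\kappa$-chain condition and $|\mathcal R|<\theta$. Then $\mathcal R$ is dangerous for $(\mathcal A,\mathcal B)$ if and only if there exist a family $Y=\{y_i:i<\theta\}$ of pairwise disjoint finite subsets of $\theta$ and a $Y$-sequence $T$ such that $\mathcal R\times\mathcal Q(Y,T)$ does not have the $\kappa$-chain condition.
   Context: Standing assumptions: $\theta$ is a singular cardinal of uncountable cofinality, $\kappa=\mathrm{cf}(\theta)$, and $\langle\theta_\alpha:\alpha<\kappa\rangle$ is a fixed increasing sequence of cardinals converging to $\theta$ with $\theta_0>\kappa$. A $(\theta,\theta)$ pair is $(\mathcal A,\mathcal B)$ with $\mathcal A=\{a_\xi:\xi<\theta\}$, $\mathcal B=\{b_\xi:\xi<\theta\}$ subsets of $\omega$ such that $a_\xi\cap b_\eta$ is finite for all $\xi,\eta<\theta$. For finite $x\subseteq\theta$, $a(x)=\bigcap_{\xi\in x}a_\xi$, $b(x)=\bigcap_{\xi\in x}b_\xi$, with $a(\emptyset)=b(\emptyset)=\omega$. The pair is nice if for every family $\{x_i:i<\theta\}$ of pairwise disjoint finite subsets of $\theta$ there are $i,j<\theta$ with $a(x_i)\cap b(x_j)\ne\emptyset$. Given a family $X=\{x_i:i<\theta\}$ of pairwise disjoint finite subsets of $\theta$, an $X$-sequence is $S=\{S_\alpha:\alpha<\kappa\}$ where the $S_\alpha$ are pairwise disjoint subsets of $\theta$, $|S_\alpha|>\theta_\alpha$, and $a(x_i)\cap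 b(x_j)=\emptyset$ for all $i,j\in S_\alpha$, for every $\alpha<\kappa$. $\mathcal Q(X,S)$ is the set of finite $F\subseteq\kappa$ such that for all distinct $\alpha,\beta\in F$ there exist $i\in S_\alpha$, $j\in S_\beta$ with $a(x_i)\cap b(x_j)\neq\emptyset$ or $b(x_i)\cap a(x_j)\ne\emptyset$; it is ordered by inclusion. For a nice pair $(\mathcal A,\mathcal B)$, a partial order $\mathcal R$ is dangerous for $(\mathcal A,\mathcal B)$ if there is $r\in\mathcal R$ with $r\Vdash_{\mathcal R}$ "$(\mathcal A,\mathcal B)$ is not nice" (niceness evaluated in the forcing extension). *)

theory Defs
  imports Main
begin

abbreviation card_lt :: "'a set \<Rightarrow> 'b set \<Rightarrow> bool" where
  "card_lt A B \<equiv> (BNF_Cardinal_Order_Relation.card_of A, BNF_Cardinal_Order_Relation.card_of B)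
       \<in> BNF_Wellorder_Constructions.ordLess"
abbreviation card_le :: "'a set \<Rightarrow> 'b set \<Rightarrow> bool" where
  "card_le A B \<equiv> (BNF_Cardinal_Order_Relation.card_of A, BNF_Cardinal_Order_Relation.card_of B)
       \<in> BNF_Wellorder_Constructions.ordLeq"
abbreviation card_eq :: "'a set \<Rightarrow> 'b set \<Rightarrow> bool" where
  "card_eq A B \<equiv> (BNF_Cardinal_Order_Relation.card_of A, BNF_Cardinal_Order_Relation.card_of B)
       \<in> BNF_Wellorder_Constructions.ordIso"

text \<open>The cardinal theta is represented by an
index set Th; its initial well-order card_of Th is the ordinal theta.\<close>

definition is_cofinality :: "'a set \<Rightarrow> 'k set \<Rightarrow> bool" where
  "is_cofinality Th K \<longleftrightarrow>
     (\<exists>X. X \<subseteq> Th \<and> BNF_Cardinal_Order_Relation.cofinal X (BNF_Cardinal_Order_Relation.card_of Th) \<and> card_eq X K) \<and>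
     (\<forall>X. X \<subseteq> Th \<and> BNF_Cardinal_Order_Relation.cofinal X (BNF_Cardinal_Order_Relation.card_of Th) \<longrightarrow> card_le K X)"

text \<open>a(x) = intersection of the a_xi for xi in x, with a(empty) = omega.\<close>
definition Int_of :: "('a \<Rightarrow> nat set) \<Rightarrow> 'a set \<Rightarrow> nat set" where
  "Int_of a x = {n. \<forall>\<xi>\<in>x. n \<in> a \<xi>}"

definition theta_pair :: "'a set \<Rightarrow> ('a \<Rightarrow> nat set) \<Rightarrow> ('a \<Rightarrow> nat set) \<Rightarrow> bool" where
  "theta_pair Th a b \<longleftrightarrow> (\<forall>\<xi>\<in>Th. \<forall>\<eta>\<in>Th. finite (a \<xi> \<inter> b \<eta>))"

definition disj_fin_family :: "'a set \<Rightarrow> ('a \<Rightarrow> 'a set) \<Rightarrow> bool" where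
  "disj_fin_family Th x \<longleftrightarrow>
     (\<forall>i\<in>Th. finite (x i) \<and> x i \<subseteq> Th) \<and>
     (\<forall>i\<in>Th. \<forall>j\<in>Th. i \<noteq> j \<longrightarrow> x i \<inter> x j = {})"

definition nice :: "'a set \<Rightarrow> ('a \<Rightarrow> nat set) \<Rightarrow> ('a \<Rightarrow> nat set) \<Rightarrow> bool" where
  "nice Th a b \<longleftrightarrow>
     (\<forall>x. disj_fin_family Th x \<longrightarrow>
        (\<exists>i\<in>Th. \<exists>j\<in>Th. Int_of a (x i) \<inter> Int_of b (x j) \<noteq> {}))"

text \<open>Partial orders: le p q means p is stronger than (extends) q.\<close>
definition partial_order_on' :: "'r set \<Rightarrow> ('r \<Rightarrow> 'r \<Rightarrow> bool) \<Rightarrow> bool" where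
  "partial_order_on' P le \<longleftrightarrow>
     (\<forall>p\<in>P. le p p) \<and>
     (\<forall>p\<in>P. \<forall>q\<in>P. \<forall>s\<in>P. le p q \<and> le q s \<longrightarrow> le p s) \<and>
     (\<forall>p\<in>P. \<forall>q\<in>P. le p q \<and> le q p \<longrightarrow> p = q)"

definition compat :: "'r set \<Rightarrow> ('r \<Rightarrow> 'r \<Rightarrow> bool) \<Rightarrow> 'r \<Rightarrow> 'r \<Rightarrow> bool" where
  "compat P le p q \<longleftrightarrow> (\<exists>s\<in>P. le s p \<and> le s q)"

definition antichain :: "'r set \<Rightarrow> ('r \<Rightarrow> 'r \<Rightarrow> bool) \<Rightarrow> 'r set \<Rightarrow> bool" where
  "antichain P le A \<longleftrightarrow> A \<subseteq> P \<and> (\<forall>p\<in>A. \<forall>q\<in>A. p \<noteq> q \<longrightarrow> \<not> compat P le p q)"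

definition chain_cond :: "'r set \<Rightarrow> ('r \<Rightarrow> 'r \<Rightarrow> bool) \<Rightarrow> 'k set \<Rightarrow> bool" where
  "chain_cond P le K \<longleftrightarrow> (\<forall>A. antichain P le A \<longrightarrow> card_lt A K)"

definition prod_le :: "('r \<Rightarrow> 'r \<Rightarrow> bool) \<Rightarrow> ('q \<Rightarrow> 'q \<Rightarrow> bool) \<Rightarrow> 'r \<times> 'q \<Rightarrow> 'r \<times> 'q \<Rightarrow> bool" where
  "prod_le le1 le2 u v \<longleftrightarrow> le1 (fst u) (fst v) \<and> le2 (snd u) (snd v)"

definition X_sequence :: "'a set \<Rightarrow> 'k set \<Rightarrow> ('k \<Rightarrow> 'a set) \<Rightarrow> ('a \<Rightarrow> nat set) \<Rightarrow>
    ('a \<Rightarrow> nat set) \<Rightarrow> ('a \<Rightarrow> 'a set) \<Rightarrow> ('k \<Rightarrow> 'a set) \<Rightarrow> bool" where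
  "X_sequence Th K thseq a b x S \<longleftrightarrow>
     (\<forall>\<alpha>\<in>K. S \<alpha> \<subseteq> Th) \<and>
     (\<forall>\<alpha>\<in>K. \<forall>\<beta>\<in>K. \<alpha> \<noteq> \<beta> \<longrightarrow> S \<alpha> \<inter> S \<beta> = {}) \<and>
     (\<forall>\<alpha>\<in>K. card_lt (thseq \<alpha>) (S \<alpha>)) \<and>
     (\<forall>\<alpha>\<in>K. \<forall>i\<in>S \<alpha>. \<forall>j\<in>S \<alpha>. Int_of a (x i) \<inter> Int_of b (x j) = {})"

definition Q_set :: "'k set \<Rightarrow> ('a \<Rightarrow> nat set) \<Rightarrow> ('a \<Rightarrow> nat set) \<Rightarrow>
    ('a \<Rightarrow> 'a set) \<Rightarrow> ('k \<Rightarrow> 'a set) \<Rightarrow> 'k set set" where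
  "Q_set K a b x S = {F. finite F \<and> F \<subseteq> K \<and>
     (\<forall>\<alpha>\<in>F. \<forall>\<beta>\<in>F. \<alpha> \<noteq> \<beta> \<longrightarrow>
        (\<exists>i\<in>S \<alpha>. \<exists>j\<in>S \<beta>. Int_of a (x i) \<inter> Int_of b (x j) \<noteq> {} \<or>
                          Int_of b (x i) \<inter> Int_of a (x j) \<noteq> {}))}"

definition Q_le :: "'k set \<Rightarrow> 'k set \<Rightarrow> bool" where
  "Q_le F G \<longleftrightarrow> G \<subseteq> F"

text \<open>The forcing relation for the sentence "(A,B) is not nice", i.e.
 r forces: there is a family {x_i : i < theta} of pairwise disjoint finite subsets
 of theta with a(x_i) cap b(x_j) empty for all i, j.  Since the x_i are finite sets
 of ordinals (ground model objects), a name for such a family is given by, for each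
 i, a set N i of pairs (p, x) (condition, value) whose conditions are predense
 below r and such that compatible conditions carry consistent values.\<close>
definition forces_not_nice :: "'r set \<Rightarrow> ('r \<Rightarrow> 'r \<Rightarrow> bool) \<Rightarrow> 'a set \<Rightarrow>
    ('a \<Rightarrow> nat set) \<Rightarrow> ('a \<Rightarrow> nat set) \<Rightarrow> 'r \<Rightarrow> bool" where
  "forces_not_nice P le Th a b r \<longleftrightarrow>
     (\<exists>N :: 'a \<Rightarrow> ('r \<times> 'a set) set.
        (\<forall>i\<in>Th. \<forall>(p, x)\<in>N i. p \<in> P \<and> le p r \<and> finite x \<and> x \<subseteq> Th) \<and>
        (\<forall>i\<in>Th. \<forall>q\<in>P. le q r \<longrightarrow> (\<exists>(p, x)\<in>N i. compat P le q p)) \<and>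
        (\<forall>i\<in>Th. \<forall>j\<in>Th. \<forall>(p, x)\<in>N i. \<forall>(q, y)\<in>N j. compat P le p q \<longrightarrow>
            (i = j \<longrightarrow> x = y) \<and> (i \<noteq> j \<longrightarrow> x \<inter> y = {}) \<and>
            Int_of a x \<inter> Int_of b y = {}))"

definition dangerous :: "'r set \<Rightarrow> ('r \<Rightarrow> 'r \<Rightarrow> bool) \<Rightarrow> 'a set \<Rightarrow>
    ('a \<Rightarrow> nat set) \<Rightarrow> ('a \<Rightarrow> nat set) \<Rightarrow> bool" where
  "dangerous P le Th a b \<longleftrightarrow> (\<exists>r\<in>P. forces_not_nice P le Th a b r)"

end

theory Submission
  imports Defs "HOL-Library.Disjoint_Sets"
begin

unbundle cardinal_syntax

text \<open>
  If a condition r forces a counterexample \<open>{x\<^sub>i}\<close> to niceness, pick for every i a condition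
  \<open>p\<^sub>i \<le> r\<close> deciding \<open>x\<^sub>i\<close>. Since \<open>|\<R>| < \<theta>\<close>, for every \<open>\<alpha> < \<kappa>\<close> some p decides more than
  \<open>\<theta>\<^sub>\<alpha>\<close> of the \<open>x\<^sub>i\<close>; thinning these fibres to make the decided values disjoint yields a family Y
  and a Y-sequence T whose blocks are fibres of conditions \<open>P\<^sub>\<alpha>\<close>. Compatible \<open>P\<^sub>\<alpha>, P\<^sub>\<beta>\<close> make
  the blocks \<open>\<alpha>, \<beta>\<close> unlinked, so the \<open>(P\<^sub>\<alpha>, {\<alpha>})\<close> form an antichain of size \<open>\<kappa>\<close> in
  \<open>\<R> \<times> \<Q>(Y, T)\<close>.

  Conversely, refine an antichain \<open>(r\<^sub>v, F\<^sub>v)\<close> of size \<open>\<kappa>\<close> to a \<Delta>-system; as \<open>\<R>\<close> is \<open>\<kappa>\<close>-cc, for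
  \<open>\<kappa>\<close> many v the tails \<open>E\<^sub>v = F\<^sub>v - root\<close> are nonempty, and compatibility of \<open>r\<^sub>v, r\<^sub>w\<close> forces
  an unlinked pair in \<open>E\<^sub>v \<times> E\<^sub>w\<close>. Write \<open>\<theta>\<close> as an increasing union of pieces of size \<open>\<theta>\<^sub>\<alpha>\<close>;
  each i of rank below \<open>E\<^sub>v\<close> is injected into every block \<open>T\<^sub>\<alpha>, \<alpha> \<in> E\<^sub>v\<close>, and the union of the
  corresponding values of Y is the value proposed by \<open>r\<^sub>v\<close> at i. Below a condition forcing that
  \<open>r\<^sub>v\<close> is in the generic filter for v with \<open>E\<^sub>v\<close> above any bound, these proposals form a
  counterexample to niceness.
\<close>

lemma card_of_wo_rel: "wo_rel |A|"
  using card_of_Well_order wo_rel_def by blast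

lemma card_of_rel_mem: "(x, y) \<in> |A| \<Longrightarrow> x \<in> A \<and> y \<in> A"
  by (metis Field_card_of FieldI1 FieldI2)

lemma card_of_refl: "x \<in> A \<Longrightarrow> (x, x) \<in> |A|"
  by (metis Field_card_of card_of_wo_rel wo_rel.REFL refl_onD)

lemma card_of_total: "x \<in> A \<Longrightarrow> y \<in> A \<Longrightarrow> (x, y) \<in> |A| \<or> (y, x) \<in> |A|"
  by (metis Field_card_of card_of_wo_rel wo_rel.TOTALS)

lemma card_of_antisym: "(x, y) \<in> |A| \<Longrightarrow> (y, x) \<in> |A| \<Longrightarrow> x = y"
  by (metis card_of_wo_rel wo_rel.ANTISYM antisymD)

lemma card_of_trans: "(x, y) \<in> |A| \<Longrightarrow> (y, z) \<in> |A| \<Longrightarrow> (x, z) \<in> |A|"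
  by (metis card_of_wo_rel wo_rel.TRANS transD)

lemma card_of_minim:
  assumes "B \<subseteq> A" "B \<noteq> {}"
  shows "wo_rel.minim |A| B \<in> B" "\<And>c. c \<in> B \<Longrightarrow> (wo_rel.minim |A| B, c) \<in> |A|"
  using assms wo_rel.minim_in[OF card_of_wo_rel, of B A] wo_rel.minim_least[OF card_of_wo_rel, of B A]
  by (auto simp: Field_card_of)

lemma card_of_suc:
  assumes "infinite A" "x \<in> A"
  defines "s \<equiv> wo_rel.suc |A| {x}"
  shows "s \<in> A" "(x, s) \<in> |A|" "x \<noteq> s"
    and "\<And>z. z \<in> A \<Longrightarrow> (x, z) \<in> |A| \<Longrightarrow> x \<noteq> z \<Longrightarrow> (s, z) \<in> |A|"
proof -
  have "AboveS |A| {x} \<noteq> {}"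
    using infinite_Card_order_limit[OF card_of_Card_order, of A x] assms(1,2)
    by (auto simp: Field_card_of AboveS_def)
  then have "s \<in> AboveS |A| {x}"
    unfolding s_def using assms(2) wo_rel.suc_AboveS[OF card_of_wo_rel, of "{x}" A]
    by (simp add: Field_card_of)
  then show "s \<in> A" "(x, s) \<in> |A|" "x \<noteq> s"
    by (auto simp: AboveS_def Field_card_of)
  show "(s, z) \<in> |A|" if "z \<in> A" "(x, z) \<in> |A|" "x \<noteq> z" for z
    unfolding s_def using that
    by (intro wo_rel.suc_least_AboveS[OF card_of_wo_rel]) (auto simp: AboveS_def Field_card_of)
qed

lemma not_card_of_ordLess: "\<not> |A| <o |B| \<longleftrightarrow> |B| \<le>o |A|"
  by (rule not_ordLess_iff_ordLeq[OF card_of_Well_order card_of_Well_order])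

lemma not_card_of_ordLeq: "\<not> |A| \<le>o |B| \<longleftrightarrow> |B| <o |A|"
  by (rule not_ordLeq_iff_ordLess[OF card_of_Well_order card_of_Well_order])

lemma card_of_inj_image: "inj_on f A \<Longrightarrow> |f ` A| =o |A|"
  using card_of_ordIso[of A "f ` A"] inj_on_imp_bij_betw[of f A] ordIso_symmetric by auto

lemma finite_card_of_ordLess_infinite: "finite X \<Longrightarrow> infinite A \<Longrightarrow> |X| <o |A|"
  using finite_ordLess_infinite[OF card_of_Well_order card_of_Well_order] by (simp add: Field_card_of)

lemma card_of_under_ordLess:
  assumes "infinite A" "x \<in> A"
  shows "|under (card_of A) x| <o |A|"
proof -
  have "under (card_of A) x = insert x (underS (card_of A) x)"
    using assms(2) by (auto simp: under_def underS_def card_of_refl)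
  moreover have "|underS (card_of A) x| <o |A|"
    using card_of_underS[OF card_of_Card_order, of x A] assms(2) by (simp add: Field_card_of)
  ultimately show ?thesis
    using assms(1) card_of_Un_ordLess_infinite[of A "{x}"] finite_card_of_ordLess_infinite[of "{x}" A]
    by simp
qed

lemma card_of_Diff_big:
  assumes "infinite K" "|K| \<le>o |A|" "|Z| <o |K|"
  shows "|K| \<le>o |A - Z|"
proof (rule ccontr)
  assume "\<not> |K| \<le>o |A - Z|"
  then have "|(A - Z) \<union> Z| <o |K|"
    using card_of_Un_ordLess_infinite[OF assms(1) _ assms(3)] not_card_of_ordLeq by blast
  moreover have "A \<subseteq> (A - Z) \<union> Z"
    by blast
  ultimately have "|A| <o |K|"
    using ordLeq_ordLess_trans[OF card_of_mono1] by blast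
  with assms(2) show False
    using not_ordLess_ordLeq by blast
qed

lemma exists_subset_card_between:
  assumes "|A| <o |B|" "|A| <o |C|"
  shows "\<exists>C'\<subseteq>C. |A| <o |C'| \<and> |C'| \<le>o |B|"
proof (cases "|C| \<le>o |B|")
  case True
  with assms(2) show ?thesis
    by (intro exI[of _ C]) simp
next
  case False
  then have "|B| \<le>o |C|"
    using not_card_of_ordLeq ordLess_imp_ordLeq by auto
  then obtain f where f: "inj_on f B" "f ` B \<subseteq> C"
    using card_of_ordLeq[of B C] by auto
  have "|A| <o |f ` B|"
    using ordLess_ordIso_trans[OF assms(1) ordIso_symmetric[OF card_of_inj_image[OF f(1)]]] .
  with f(2) card_of_image[of f B] show ?thesis
    by (intro exI[of _ "f ` B"]) simp
qed

lemma card_of_big_fiber: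
  assumes "infinite B" "|R| \<le>o |B|" "|B| <o |A|" "f ` A \<subseteq> R"
  shows "\<exists>p\<in>R. |B| <o |{i\<in>A. f i = p}|"
proof (rule ccontr)
  assume "\<not> (\<exists>p\<in>R. |B| <o |{i\<in>A. f i = p}| )"
  then have "\<forall>p\<in>R. |{i\<in>A. f i = p}| \<le>o |B|"
    using not_card_of_ordLess by auto
  then have "|\<Union>p\<in>R. {i\<in>A. f i = p}| \<le>o |B|"
    by (rule card_of_UNION_ordLeq_infinite[OF assms(1,2)])
  moreover have "(\<Union>p\<in>R. {i\<in>A. f i = p}) = A"
    using assms(4) by blast
  ultimately show False
    using assms(3) not_ordLess_ordLeq by auto
qed

lemma card_of_disjoint_family_meeting:
  assumes "disjoint_family_on E V"
  shows "|{v\<in>V. E v \<inter> S \<noteq> {}}| \<le>o |S|"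
proof -
  define h where "h v = (SOME t. t \<in> E v \<inter> S)" for v
  have h: "h v \<in> E v \<inter> S" if "v \<in> V" "E v \<inter> S \<noteq> {}" for v
    unfolding h_def by (rule someI_ex) (use that in blast)
  have "inj_on h {v\<in>V. E v \<inter> S \<noteq> {}}"
  proof (rule inj_onI)
    fix v w assume v: "v \<in> {v\<in>V. E v \<inter> S \<noteq> {}}" and w: "w \<in> {v\<in>V. E v \<inter> S \<noteq> {}}"
      and "h v = h w"
    then have "h v \<in> E v \<inter> E w"
      using h[of v] h[of w] by auto
    then have "E v \<inter> E w \<noteq> {}"
      by blast
    with v w assms show "v = w"
      unfolding disjoint_family_on_def by blast
  qed
  moreover have "h ` {v\<in>V. E v \<inter> S \<noteq> {}} \<subseteq> S"
    using h by auto
  ultimately show ?thesis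
    unfolding card_of_ordLeq[symmetric] by blast
qed

lemma card_of_disjoint_family_avoiding:
  assumes "infinite B" "|U| \<le>o |B|" "|B| <o |I|" "disjoint_family_on x I"
  shows "|B| <o |{i\<in>I. x i \<inter> U = {}}|"
proof (rule ccontr)
  assume "\<not> |B| <o |{i\<in>I. x i \<inter> U = {}}|"
  then have avoiding: "|{i\<in>I. x i \<inter> U = {}}| \<le>o |B|"
    using not_card_of_ordLess by auto
  have meeting: "|{i\<in>I. x i \<inter> U \<noteq> {}}| \<le>o |B|"
    using ordLeq_transitive[OF card_of_disjoint_family_meeting[OF assms(4)] assms(2)] .
  have "infinite (Field |B| )"
    using assms(1) by (simp add: Field_card_of)
  from card_of_Un_ordLeq_infinite_Field[OF this avoiding meeting card_of_Card_order]
  have "|{i\<in>I. x i \<inter> U = {}} \<union> {i\<in>I. x i \<inter> U \<noteq> {}}| \<le>o |B|" .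
  moreover have "{i\<in>I. x i \<inter> U = {}} \<union> {i\<in>I. x i \<inter> U \<noteq> {}} = I"
    by blast
  ultimately have "|I| \<le>o |B|"
    by simp
  with not_ordLess_ordLeq[OF assms(3)] show False
    by contradiction
qed

lemma exists_index_above:
  fixes K :: "'k set" and V :: "'v set"
  assumes "infinite K" "|K| \<le>o |V|" "\<And>v. v \<in> V \<Longrightarrow> E v \<subseteq> K" "disjoint_family_on E V" "g \<in> K"
  obtains v where "v \<in> V" "\<And>\<alpha>. \<alpha> \<in> E v \<Longrightarrow> (g, \<alpha>) \<in> |K|"
proof -
  have "|{v\<in>V. E v \<inter> under (card_of K) g \<noteq> {}}| <o |K|"
    using ordLeq_ordLess_trans[OF card_of_disjoint_family_meeting[OF assms(4)]
        card_of_under_ordLess[OF assms(1,5)]] .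
  then have "\<not> V \<subseteq> {v\<in>V. E v \<inter> under (card_of K) g \<noteq> {}}"
    using ordLeq_ordLess_trans[OF assms(2) ordLeq_ordLess_trans[OF card_of_mono1]]
      ordLess_irreflexive by blast
  then obtain v where v: "v \<in> V" "E v \<inter> under (card_of K) g = {}"
    by blast
  have "(g, \<alpha>) \<in> |K|" if "\<alpha> \<in> E v" for \<alpha>
    using v assms(3)[OF v(1)] that card_of_total[OF assms(5), of \<alpha>] unfolding under_def by blast
  with v(1) show thesis
    using that by blast
qed

section \<open>Regular cardinals and cofinality\<close>

lemma not_cofinal_imp_bounded:
  assumes "\<not> cofinal Z |A|" "Z \<subseteq> A"
  shows "\<exists>u\<in>A. \<forall>t\<in>Z. (t, u) \<in> |A|"
proof -
  obtain u where "u \<in> A" and u: "\<forall>t\<in>Z. u = t \<or> (u, t) \<notin> |A|"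
    using assms(1) unfolding cofinal_def Field_card_of by blast
  have "(t, u) \<in> |A|" if "t \<in> Z" for t
  proof -
    have "t \<in> A" using that assms(2) by blast
    then show ?thesis
      using u that card_of_refl[of t A] card_of_total[of t A u] \<open>u \<in> A\<close> by auto
  qed
  with \<open>u \<in> A\<close> show ?thesis by blast
qed

lemma regularCard_bounded:
  assumes "regularCard |K|" "Z \<subseteq> K" "|Z| <o |K|"
  shows "\<exists>g\<in>K. \<forall>z\<in>Z. (z, g) \<in> |K|"
proof (rule not_cofinal_imp_bounded[OF _ assms(2)])
  show "\<not> cofinal Z |K|"
    using assms not_ordLess_ordIso unfolding regularCard_def Field_card_of by blast
qed

lemma is_cofinality_bounded:
  assumes "is_cofinality Th K" "Z \<subseteq> Th" "|Z| <o |K|"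
  shows "\<exists>u\<in>Th. \<forall>t\<in>Z. (t, u) \<in> |Th|"
proof (rule not_cofinal_imp_bounded[OF _ assms(2)])
  show "\<not> cofinal Z |Th|"
    using assms not_ordLess_ordLeq unfolding is_cofinality_def by blast
qed

lemma is_cofinality_bounded_image_under:
  assumes cf: "is_cofinality Th K" and "infinite K" "e ` K \<subseteq> Th" "d \<in> K"
  shows "\<exists>u\<in>Th. \<forall>t\<in>e ` under (card_of K) d. (t, u) \<in> |Th|"
proof (rule is_cofinality_bounded[OF cf])
  have "under (card_of K) d \<subseteq> K"
    unfolding under_def using card_of_rel_mem[of _ d K] by blast
  then show "e ` under (card_of K) d \<subseteq> Th"
    using assms(3) by blast
  show "|e ` under (card_of K) d| <o |K|"
    using ordLeq_ordLess_trans[OF card_of_image card_of_under_ordLess[OF assms(2,4)]] .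
qed

lemma is_cofinality_regularCard:
  assumes cf: "is_cofinality Th K" and "infinite K"
  shows "regularCard |K|"
  unfolding regularCard_def Field_card_of
proof (intro allI impI)
  fix Z assume Z: "Z \<subseteq> K \<and> cofinal Z |K|"
  obtain X where X: "X \<subseteq> Th" "cofinal X |Th|" "|X| =o |K|"
    using cf unfolding is_cofinality_def by blast
  obtain e where e: "bij_betw e K X"
    using X(3) ordIso_symmetric card_of_ordIso by blast
  have "\<not> |Z| <o |K|"
  proof
    assume small: "|Z| <o |K|"
    have "e ` K \<subseteq> Th"
      using e X(1) unfolding bij_betw_def by blast
    then have "\<forall>z\<in>Z. \<exists>u. u \<in> Th \<and> (\<forall>t\<in>e ` under (card_of K) z. (t, u) \<in> |Th| )"
      using is_cofinality_bounded_image_under[OF cf assms(2)] Z by blast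
    from bchoice[OF this] obtain u
      where u: "\<forall>z\<in>Z. u z \<in> Th \<and> (\<forall>t\<in>e ` under (card_of K) z. (t, u z) \<in> |Th| )" ..
    have "cofinal (u ` Z) |Th|"
      unfolding cofinal_def Field_card_of
    proof
      fix c assume "c \<in> Th"
      then obtain x where x: "x \<in> X" "c \<noteq> x" "(c, x) \<in> |Th|"
        using X(2) unfolding cofinal_def Field_card_of by blast
      then obtain d where d: "d \<in> K" "x = e d"
        using e unfolding bij_betw_def by blast
      then obtain z where z: "z \<in> Z" "(d, z) \<in> |K|"
        using Z unfolding cofinal_def Field_card_of by blast
      have "x \<in> e ` under (card_of K) z"
        using z(2) d(2) unfolding under_def by blast
      then have "(x, u z) \<in> |Th|"
        using u z(1) by blast
      then have "(c, u z) \<in> |Th|" "c \<noteq> u z"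
        using card_of_trans[OF x(3)] card_of_antisym[OF x(3)] x(2) by blast+
      then show "\<exists>b\<in>u ` Z. c \<noteq> b \<and> (c, b) \<in> |Th|"
        using z(1) by blast
    qed
    moreover have "u ` Z \<subseteq> Th"
      using u by blast
    ultimately have "|K| \<le>o |u ` Z|"
      using cf unfolding is_cofinality_def by blast
    moreover have "|u ` Z| <o |K|"
      using card_of_image[of u Z] small by (rule ordLeq_ordLess_trans)
    ultimately show False
      using not_ordLess_ordLeq by blast
  qed
  moreover have "|Z| \<le>o |K|"
    using Z card_of_mono1 by blast
  ultimately show "|Z| =o |K|"
    using ordLeq_iff_ordLess_or_ordIso by blast
qed

lemma exists_small_levels:
  assumes cf: "is_cofinality Th K" and "infinite Th" "infinite K"
  obtains lev where "lev ` Th \<subseteq> K" "\<And>d. d \<in> K \<Longrightarrow> |{i\<in>Th. (lev i, d) \<in> |K|}| <o |Th|"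
proof -
  obtain X where X: "X \<subseteq> Th" "cofinal X |Th|" "|X| =o |K|"
    using cf unfolding is_cofinality_def by blast
  obtain e where e: "bij_betw e K X"
    using X(3) ordIso_symmetric card_of_ordIso by blast
  have "\<forall>i\<in>Th. \<exists>d. d \<in> K \<and> (i, e d) \<in> |Th|"
  proof
    fix i assume "i \<in> Th"
    then obtain t where "t \<in> X" "(i, t) \<in> |Th|"
      using X(2) unfolding cofinal_def Field_card_of by blast
    then show "\<exists>d. d \<in> K \<and> (i, e d) \<in> |Th|"
      using e unfolding bij_betw_def by blast
  qed
  from bchoice[OF this] obtain lev where lev: "\<forall>i\<in>Th. lev i \<in> K \<and> (i, e (lev i)) \<in> |Th|" ..
  have "|{i\<in>Th. (lev i, d) \<in> |K|}| <o |Th|" if "d \<in> K" for d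
  proof -
    have "e ` K \<subseteq> Th"
      using e X(1) unfolding bij_betw_def by blast
    from is_cofinality_bounded_image_under[OF cf assms(3) this that]
    obtain u where u: "u \<in> Th" "\<forall>t\<in>e ` under (card_of K) d. (t, u) \<in> |Th|"
      by blast
    have "{i\<in>Th. (lev i, d) \<in> |K|} \<subseteq> under (card_of Th) u"
    proof
      fix i assume i: "i \<in> {i\<in>Th. (lev i, d) \<in> |K|}"
      then have "(e (lev i), u) \<in> |Th|"
        using u(2) unfolding under_def by blast
      moreover have "(i, e (lev i)) \<in> |Th|"
        using lev i by blast
      ultimately show "i \<in> under (card_of Th) u"
        unfolding under_def by (blast intro: card_of_trans)
    qed
    from ordLeq_ordLess_trans[OF card_of_mono1[OF this] card_of_under_ordLess[OF assms(2) u(1)]]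
    show ?thesis .
  qed
  moreover have "lev ` Th \<subseteq> K"
    using lev by blast
  ultimately show thesis
    using that by simp
qed

section \<open>The \<Delta>-system lemma\<close>

lemma exists_maximal_pairwise_subset:
  obtains M where "M \<subseteq> S" "pairwise P M"
    "\<And>x. x \<in> S \<Longrightarrow> x \<notin> M \<Longrightarrow> \<not> pairwise P (insert x M)"
proof -
  define A where "A = {M. M \<subseteq> S \<and> pairwise P M}"
  have "\<forall>C\<in>chains A. \<Union>C \<in> A"
  proof
    fix C assume "C \<in> chains A"
    then have "C \<subseteq> A" "chain\<^sub>\<subseteq> C"
      unfolding chains_def by auto
    then show "\<Union>C \<in> A"
      using pairwise_chain_Union[of C P] unfolding A_def by blast
  qed
  from Zorn_Lemma[OF this] obtain M where M: "M \<in> A" and max: "\<forall>X\<in>A. M \<subseteq> X \<longrightarrow> X = M"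
    by blast
  have "\<not> pairwise P (insert x M)" if "x \<in> S" "x \<notin> M" for x
  proof
    assume "pairwise P (insert x M)"
    then have "insert x M \<in> A"
      using M that(1) unfolding A_def by blast
    then have "insert x M = M"
      using max by blast
    with that(2) show False by blast
  qed
  with M show thesis
    using that unfolding A_def by blast
qed

lemma delta_root_subset:
  assumes "infinite W" "\<And>v w. v \<in> W \<Longrightarrow> w \<in> W \<Longrightarrow> v \<noteq> w \<Longrightarrow> F v \<inter> F w = \<rho>" "v \<in> W"
  shows "\<rho> \<subseteq> F v"
proof -
  have "W - {v} \<noteq> {}"
    using assms(1) by (metis finite.emptyI infinite_remove)
  then obtain w where "w \<in> W" "w \<noteq> v"
    by blast
  then show ?thesis
    using assms(2)[OF assms(3)] by blast
qed

lemma exists_disjoint_subfamily: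
  fixes F :: "'i \<Rightarrow> 'b set" and K :: "'k set"
  assumes stable: "stable |K|" and "infinite K" and "|K| \<le>o |W|"
    and nonempty: "\<And>v. v \<in> W \<Longrightarrow> finite (F v) \<and> F v \<noteq> {}"
    and few: "\<And>t. |{v\<in>W. t \<in> F v}| <o |K|"
  obtains M where "M \<subseteq> W" "|K| \<le>o |M|" "disjoint_family_on F M"
proof -
  obtain M where M: "M \<subseteq> W" "pairwise (\<lambda>v w. F v \<inter> F w = {}) M"
    and max: "\<And>v. v \<in> W \<Longrightarrow> v \<notin> M \<Longrightarrow> \<not> pairwise (\<lambda>v w. F v \<inter> F w = {}) (insert v M)"
    using exists_maximal_pairwise_subset[of W "\<lambda>v w. F v \<inter> F w = {}"] by blast
  have "|K| \<le>o |M|"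
  proof (rule ccontr)
    assume "\<not> |K| \<le>o |M|"
    then have "|M| <o |K|"
      using not_card_of_ordLeq by auto
    moreover have "\<forall>v\<in>M. |F v| <o |K|"
      using finite_card_of_ordLess_infinite nonempty M(1) \<open>infinite K\<close> by auto
    ultimately have "|\<Union>v\<in>M. F v| <o |K|"
      by (rule card_of_UNION_ordLess_infinite[OF stable])
    then have small: "|\<Union>t\<in>(\<Union>v\<in>M. F v). {v\<in>W. t \<in> F v}| <o |K|"
      by (rule card_of_UNION_ordLess_infinite[OF stable]) (use few in auto)
    have "\<not> W \<subseteq> (\<Union>t\<in>(\<Union>v\<in>M. F v). {v\<in>W. t \<in> F v})"
    proof
      assume "W \<subseteq> (\<Union>t\<in>(\<Union>v\<in>M. F v). {v\<in>W. t \<in> F v})"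
      from ordLeq_transitive[OF assms(3) card_of_mono1[OF this]]
      show False
        using not_ordLess_ordLeq[OF small] by contradiction
    qed
    then obtain v where v: "v \<in> W" "\<forall>w\<in>M. F v \<inter> F w = {}"
      by blast
    moreover have "F v \<noteq> {}"
      using nonempty[OF v(1)] by auto
    ultimately have "v \<notin> M" "pairwise (\<lambda>v w. F v \<inter> F w = {}) (insert v M)"
      using M(2) by (auto simp: pairwise_insert)
    then show False
      using max v(1) by auto
  qed
  with M show thesis
    using that unfolding disjoint_family_on_def pairwise_def by auto
qed

lemma delta_system_card:
  fixes F :: "'i \<Rightarrow> 'b set" and K :: "'k set"
  assumes stable: "stable |K|" and "infinite K"
  shows "|K| \<le>o |W| \<Longrightarrow> (\<And>v. v \<in> W \<Longrightarrow> finite (F v) \<and> card (F v) = n) \<Longrightarrow>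
    \<exists>W' \<rho>. W' \<subseteq> W \<and> |K| \<le>o |W'| \<and> (\<forall>v\<in>W'. \<forall>w\<in>W'. v \<noteq> w \<longrightarrow> F v \<inter> F w = \<rho>)"
proof (induction n arbitrary: W F)
  case 0
  have "F v = {}" if "v \<in> W" for v
    using "0.prems"(2)[OF that] by (auto simp: card_eq_0_iff)
  with "0.prems"(1) show ?case
    by (intro exI[of _ W] exI[of _ "{}"]) simp
next
  case (Suc n)
  show ?case
  proof (cases "\<exists>t. |K| \<le>o |{v\<in>W. t \<in> F v}|")
    case True
    then obtain t where t: "|K| \<le>o |{v\<in>W. t \<in> F v}|" ..
    have "\<exists>W' \<rho>. W' \<subseteq> {v\<in>W. t \<in> F v} \<and> |K| \<le>o |W'| \<and>
        (\<forall>v\<in>W'. \<forall>w\<in>W'. v \<noteq> w \<longrightarrow> (F v - {t}) \<inter> (F w - {t}) = \<rho>)"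
      by (rule Suc.IH[OF t]) (use Suc.prems(2) in auto)
    then obtain W' \<rho> where W': "W' \<subseteq> {v\<in>W. t \<in> F v}" "|K| \<le>o |W'|"
      and root: "\<forall>v\<in>W'. \<forall>w\<in>W'. v \<noteq> w \<longrightarrow> (F v - {t}) \<inter> (F w - {t}) = \<rho>"
      by auto
    from W'(1) root have "\<forall>v\<in>W'. \<forall>w\<in>W'. v \<noteq> w \<longrightarrow> F v \<inter> F w = insert t \<rho>"
      by blast
    with W' show ?thesis
      by (intro exI[of _ W'] exI[of _ "insert t \<rho>"]) auto
  next
    case False
    then have few: "|{v\<in>W. t \<in> F v}| <o |K|" for t
      using not_card_of_ordLeq by auto
    obtain M where "M \<subseteq> W" "|K| \<le>o |M|" "disjoint_family_on F M"
      by (rule exists_disjoint_subfamily[OF assms Suc.prems(1) _ few]) (auto dest!: Suc.prems(2))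
    then show ?thesis
      unfolding disjoint_family_on_def by (intro exI[of _ M] exI[of _ "{}"]) auto
  qed
qed

lemma delta_system:
  fixes F :: "'i \<Rightarrow> 'b set" and K :: "'k set"
  assumes stable: "stable |K|" and uncountable: "|UNIV :: nat set| <o |K|"
    and "|K| \<le>o |W|" and "\<And>v. v \<in> W \<Longrightarrow> finite (F v)"
  obtains W' \<rho> where "W' \<subseteq> W" "|K| \<le>o |W'|" "\<And>v w. v \<in> W' \<Longrightarrow> w \<in> W' \<Longrightarrow> v \<noteq> w \<Longrightarrow> F v \<inter> F w = \<rho>"
proof -
  have "\<exists>n. |K| \<le>o |{v\<in>W. card (F v) = n}|"
  proof (rule ccontr)
    assume "\<nexists>n. |K| \<le>o |{v\<in>W. card (F v) = n}|"
    then have "|{v\<in>W. card (F v) = n}| <o |K|" for n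
      using not_card_of_ordLeq by auto
    then have "|\<Union>n. {v\<in>W. card (F v) = n}| <o |K|"
      by (intro card_of_UNION_ordLess_infinite[OF stable uncountable]) simp
    moreover have "(\<Union>n. {v\<in>W. card (F v) = n}) = W"
      by blast
    ultimately show False
      using assms(3) not_ordLess_ordLeq by force
  qed
  then obtain n where "|K| \<le>o |{v\<in>W. card (F v) = n}|" ..
  moreover have "infinite K"
    using uncountable infinite_iff_card_of_nat ordLess_imp_ordLeq by auto
  ultimately have "\<exists>W' \<rho>. W' \<subseteq> {v\<in>W. card (F v) = n} \<and> |K| \<le>o |W'| \<and>
      (\<forall>v\<in>W'. \<forall>w\<in>W'. v \<noteq> w \<longrightarrow> F v \<inter> F w = \<rho>)"
    by (intro delta_system_card[OF stable]) (use assms(4) in auto)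
  then obtain W' \<rho> where W': "W' \<subseteq> {v\<in>W. card (F v) = n}" "|K| \<le>o |W'|"
    and root: "\<forall>v\<in>W'. \<forall>w\<in>W'. v \<noteq> w \<longrightarrow> F v \<inter> F w = \<rho>"
    by auto
  show thesis
    by (rule that[of W' \<rho>]) (use W' root in auto)
qed

section \<open>Conditions, antichains and names\<close>

lemma po_le_refl: "partial_order_on' R le \<Longrightarrow> p \<in> R \<Longrightarrow> le p p"
  unfolding partial_order_on'_def by blast

lemma po_le_trans:
  "partial_order_on' R le \<Longrightarrow> p \<in> R \<Longrightarrow> q \<in> R \<Longrightarrow> s \<in> R \<Longrightarrow> le p q \<Longrightarrow> le q s \<Longrightarrow> le p s"
  unfolding partial_order_on'_def by blast

lemma compatI: "s \<in> R \<Longrightarrow> le s p \<Longrightarrow> le s q \<Longrightarrow> compat R le p q"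
  unfolding compat_def by blast

lemma compat_refl: "partial_order_on' R le \<Longrightarrow> p \<in> R \<Longrightarrow> compat R le p p"
  unfolding compat_def partial_order_on'_def by blast

lemma compat_sym: "compat R le p q \<Longrightarrow> compat R le q p"
  unfolding compat_def by blast

lemma compat_le_mono:
  assumes "partial_order_on' R le" "p \<in> R" "q \<in> R" "le p q" "compat R le p s"
  shows "compat R le q s"
  using assms unfolding compat_def partial_order_on'_def by blast

lemma exists_maximal_antichain:
  assumes "partial_order_on' R le" "D \<subseteq> R"
  obtains M where "antichain R le M" "M \<subseteq> D" "\<And>q. q \<in> D \<Longrightarrow> \<exists>m\<in>M. compat R le q m"
proof -
  obtain M where M: "M \<subseteq> D" "pairwise (\<lambda>p q. \<not> compat R le p q) M"
    and max: "\<And>q. q \<in> D \<Longrightarrow> q \<notin> M \<Longrightarrow> \<not> pairwise (\<lambda>p q. \<not> compat R le p q) (insert q M)"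
    using exists_maximal_pairwise_subset[of D "\<lambda>p q. \<not> compat R le p q"] by blast
  have "\<exists>m\<in>M. compat R le q m" if "q \<in> D" for q
  proof (cases "q \<in> M")
    case True
    then show ?thesis
      using compat_refl[OF assms(1)] M(1) assms(2) by blast
  next
    case False
    then show ?thesis
      using max[OF that] M(2) unfolding pairwise_insert by (auto intro: compat_sym)
  qed
  moreover have "antichain R le M"
    using M assms(2) unfolding antichain_def pairwise_def by blast
  ultimately show thesis
    using that M(1) by blast
qed

text \<open>In forcing terms: r forces that the generic filter contains \<open>c v\<close> for indices v with
  \<open>E v\<close> above any given bound.\<close>

lemma exists_condition_meeting_cofinally:
  fixes R :: "'r set" and K :: "'k set" and V :: "'v set"
  assumes po: "partial_order_on' R le" and cc: "chain_cond R le K"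
    and regular: "regularCard |K|" and "infinite K"
    and "|K| \<le>o |V|" and c: "c ` V \<subseteq> R"
    and E: "\<And>v. v \<in> V \<Longrightarrow> E v \<subseteq> K" and disjoint: "disjoint_family_on E V"
  shows "\<exists>r\<in>R. \<forall>q\<in>R. le q r \<longrightarrow> (\<forall>\<gamma>\<in>K. \<exists>v\<in>V. (\<forall>\<alpha>\<in>E v. (\<gamma>, \<alpha>) \<in> |K| ) \<and> compat R le q (c v))"
proof (rule ccontr)
  define D where "D = {q\<in>R. \<exists>\<gamma>\<in>K. \<forall>v\<in>V. (\<forall>\<alpha>\<in>E v. (\<gamma>, \<alpha>) \<in> |K| ) \<longrightarrow> \<not> compat R le q (c v)}"
  assume "\<not> ?thesis"
  then have dense: "\<exists>q\<in>D. le q r" if "r \<in> R" for r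
    using that unfolding D_def by blast
  obtain M where "antichain R le M" "M \<subseteq> D" and M: "\<And>q. q \<in> D \<Longrightarrow> \<exists>m\<in>M. compat R le q m"
    using exists_maximal_antichain[OF po, of D] unfolding D_def by blast
  from cc[unfolded chain_cond_def, rule_format, OF this(1)] have "|M| <o |K|" .
  have "\<forall>m\<in>M. \<exists>\<gamma>. \<gamma> \<in> K \<and> (\<forall>v\<in>V. (\<forall>\<alpha>\<in>E v. (\<gamma>, \<alpha>) \<in> |K| ) \<longrightarrow> \<not> compat R le m (c v))"
    using \<open>M \<subseteq> D\<close> unfolding D_def by blast
  from bchoice[OF this] obtain \<gamma> where \<gamma>: "\<forall>m\<in>M. \<gamma> m \<in> K \<and>
      (\<forall>v\<in>V. (\<forall>\<alpha>\<in>E v. (\<gamma> m, \<alpha>) \<in> |K| ) \<longrightarrow> \<not> compat R le m (c v))" ..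
  have "\<gamma> ` M \<subseteq> K"
    using \<gamma> by blast
  moreover have "|\<gamma> ` M| <o |K|"
    using ordLeq_ordLess_trans[OF card_of_image \<open>|M| <o |K|\<close>] .
  ultimately have "\<exists>g\<in>K. \<forall>\<beta>\<in>\<gamma> ` M. (\<beta>, g) \<in> |K|"
    by (rule regularCard_bounded[OF regular])
  then obtain g where g: "g \<in> K" "\<And>m. m \<in> M \<Longrightarrow> (\<gamma> m, g) \<in> |K|"
    by blast
  obtain v where v: "v \<in> V" and above: "\<And>\<alpha>. \<alpha> \<in> E v \<Longrightarrow> (g, \<alpha>) \<in> |K|"
    by (rule exists_index_above[OF \<open>infinite K\<close> \<open>|K| \<le>o |V|\<close> _ disjoint g(1)]) (use E in auto)
  obtain q where q: "q \<in> D" "le q (c v)"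
    using dense c v by blast
  then obtain m where m: "m \<in> M" "compat R le q m"
    using M by blast
  have "compat R le m (c v)"
    using compat_le_mono[OF po _ _ q(2) m(2)] q(1) c v unfolding D_def
    by (auto intro: compat_sym)
  moreover have "\<forall>\<alpha>\<in>E v. (\<gamma> m, \<alpha>) \<in> |K|"
    using card_of_trans[OF g(2)[OF m(1)]] above by blast
  ultimately show False
    using \<gamma> m(1) v by blast
qed

lemma Int_of_empty: "Int_of a {} = UNIV"
  unfolding Int_of_def by simp

lemma Int_of_antimono: "x \<subseteq> y \<Longrightarrow> Int_of a y \<subseteq> Int_of a x"
  unfolding Int_of_def by blast

lemma forces_not_nice_decided_values:
  fixes R :: "'r set" and Th :: "'a set"
  assumes po: "partial_order_on' R le" and "r \<in> R" and "forces_not_nice R le Th a b r"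
  obtains p x where "\<And>i. i \<in> Th \<Longrightarrow> p i \<in> R \<and> finite (x i) \<and> x i \<subseteq> Th"
    and "\<And>i j. i \<in> Th \<Longrightarrow> j \<in> Th \<Longrightarrow> compat R le (p i) (p j) \<Longrightarrow>
           (i \<noteq> j \<longrightarrow> x i \<inter> x j = {}) \<and> Int_of a (x i) \<inter> Int_of b (x j) = {}"
proof -
  obtain N :: "'a \<Rightarrow> ('r \<times> 'a set) set"
    where N1: "\<forall>i\<in>Th. \<forall>(p, x)\<in>N i. p \<in> R \<and> le p r \<and> finite x \<and> x \<subseteq> Th"
      and N2: "\<forall>i\<in>Th. \<forall>q\<in>R. le q r \<longrightarrow> (\<exists>(p, x)\<in>N i. compat R le q p)"
      and N3: "\<forall>i\<in>Th. \<forall>j\<in>Th. \<forall>(p, x)\<in>N i. \<forall>(q, y)\<in>N j. compat R le p q \<longrightarrow>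
            (i = j \<longrightarrow> x = y) \<and> (i \<noteq> j \<longrightarrow> x \<inter> y = {}) \<and> Int_of a x \<inter> Int_of b y = {}"
    using assms(3) unfolding forces_not_nice_def by blast
  have "\<forall>i\<in>Th. \<exists>px. px \<in> N i"
  proof
    fix i assume "i \<in> Th"
    from po_le_refl[OF po assms(2)] have "\<exists>(p, x)\<in>N i. compat R le r p"
      using N2 \<open>i \<in> Th\<close> assms(2) by blast
    then show "\<exists>px. px \<in> N i"
      by auto
  qed
  from bchoice[OF this] obtain f where f: "\<forall>i\<in>Th. f i \<in> N i" ..
  define p where "p i = fst (f i)" for i
  define x where "x i = snd (f i)" for i
  have px: "(p i, x i) \<in> N i" if "i \<in> Th" for i
    using f that unfolding p_def x_def by simp
  show thesis
  proof (rule that[of p x])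
    show "p i \<in> R \<and> finite (x i) \<and> x i \<subseteq> Th" if "i \<in> Th" for i
      using bspec[OF bspec[OF N1 that] px[OF that]] by simp
    show "(i \<noteq> j \<longrightarrow> x i \<inter> x j = {}) \<and> Int_of a (x i) \<inter> Int_of b (x j) = {}"
      if "i \<in> Th" "j \<in> Th" "compat R le (p i) (p j)" for i j
    proof -
      have "\<forall>(q, y)\<in>N j. compat R le (p i) q \<longrightarrow>
          (i = j \<longrightarrow> x i = y) \<and> (i \<noteq> j \<longrightarrow> x i \<inter> y = {}) \<and> Int_of a (x i) \<inter> Int_of b y = {}"
        using bspec[OF bspec[OF bspec[OF N3 that(1)] that(2)] px[OF that(1)]] by simp
      from bspec[OF this px[OF that(2)]] show ?thesis
        using that(3) by simp
    qed
  qed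
qed

text \<open>In the name built below, the value at i under p is proposed by the least index v (in the
  well-order \<open>|V|\<close>) admissible for i whose condition is compatible with p; leastness makes
  compatible conditions propose the same value.\<close>

definition first_candidate ::
    "'r set \<Rightarrow> ('r \<Rightarrow> 'r \<Rightarrow> bool) \<Rightarrow> 'v set \<Rightarrow> ('v \<Rightarrow> 'r) \<Rightarrow> ('v \<Rightarrow> 'a set) \<Rightarrow> 'r \<Rightarrow> 'a \<Rightarrow> 'v \<Rightarrow> bool"
  where "first_candidate R le V c L p i v \<longleftrightarrow> v \<in> V \<and> i \<in> L v \<and> le p (c v) \<and>
    (\<forall>w\<in>V. (w, v) \<in> |V| \<and> w \<noteq> v \<and> i \<in> L w \<longrightarrow> \<not> compat R le p (c w))"

lemma first_candidate_unique:
  assumes po: "partial_order_on' R le" and c: "c ` V \<subseteq> R"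
    and fv: "first_candidate R le V c L p i v" and fu: "first_candidate R le V c L q i u"
    and "compat R le p q" "p \<in> R" "q \<in> R"
  shows "v = u"
proof (rule ccontr)
  assume "v \<noteq> u"
  obtain s where s: "s \<in> R" "le s p" "le s q"
    using assms(5) unfolding compat_def by blast
  have vu: "v \<in> V" "u \<in> V" "c v \<in> R" "c u \<in> R" "le p (c v)" "le q (c u)" "i \<in> L v" "i \<in> L u"
    using fv fu c unfolding first_candidate_def by auto
  have "compat R le p (c u)"
    using compatI[where le = le, OF s(1) s(2) po_le_trans[OF po s(1) \<open>q \<in> R\<close> vu(4) s(3) vu(6)]] .
  moreover have "compat R le q (c v)"
    using compatI[where le = le, OF s(1) s(3) po_le_trans[OF po s(1) \<open>p \<in> R\<close> vu(3) s(2) vu(5)]] .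
  ultimately show False
    using card_of_total[OF vu(1,2)] fv fu \<open>v \<noteq> u\<close> vu unfolding first_candidate_def by metis
qed

lemma exists_first_candidate:
  assumes po: "partial_order_on' R le" and c: "c ` V \<subseteq> R" and "q \<in> R"
    and "\<exists>v\<in>V. i \<in> L v \<and> compat R le q (c v)"
  obtains s v where "s \<in> R" "le s q" "first_candidate R le V c L s i v"
proof -
  define D where "D = {v\<in>V. i \<in> L v \<and> compat R le q (c v)}"
  define v where "v = wo_rel.minim |V| D"
  have "D \<subseteq> V" "D \<noteq> {}"
    using assms(4) unfolding D_def by auto
  then have v: "v \<in> D" and least: "\<And>w. w \<in> D \<Longrightarrow> (v, w) \<in> |V|"
    using card_of_minim[OF \<open>D \<subseteq> V\<close> \<open>D \<noteq> {}\<close>] unfolding v_def by auto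
  then obtain s where s: "s \<in> R" "le s q" "le s (c v)"
    unfolding D_def compat_def by blast
  have "first_candidate R le V c L s i v"
    unfolding first_candidate_def
  proof (intro conjI ballI impI notI)
    show "v \<in> V" "i \<in> L v" "le s (c v)"
      using v s unfolding D_def by auto
  next
    fix w assume w: "w \<in> V" "(w, v) \<in> |V| \<and> w \<noteq> v \<and> i \<in> L w" and "compat R le s (c w)"
    then have "compat R le q (c w)"
      using compat_le_mono[OF po s(1) assms(3) s(2)] by blast
    with w have "(v, w) \<in> |V|"
      using least unfolding D_def by blast
    with w show False
      using card_of_antisym[of w v V] by blast
  qed
  with s show thesis
    using that by blast
qed

lemma forces_not_nice_intro:
  fixes R :: "'r set" and Th :: "'a set" and V :: "'v set"
    and c :: "'v \<Rightarrow> 'r" and L :: "'v \<Rightarrow> 'a set" and z :: "'v \<Rightarrow> 'a \<Rightarrow> 'a set"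
  assumes po: "partial_order_on' R le" and r: "r \<in> R" and c: "c ` V \<subseteq> R"
    and finite_values: "\<And>v i. v \<in> V \<Longrightarrow> i \<in> L v \<Longrightarrow> finite (z v i) \<and> z v i \<subseteq> Th"
    and predense: "\<And>i q. i \<in> Th \<Longrightarrow> q \<in> R \<Longrightarrow> le q r \<Longrightarrow> \<exists>v\<in>V. i \<in> L v \<and> compat R le q (c v)"
    and disjoint: "\<And>v u i j. v \<in> V \<Longrightarrow> u \<in> V \<Longrightarrow> i \<in> L v \<Longrightarrow> j \<in> L u \<Longrightarrow> i \<noteq> j \<Longrightarrow>
      z v i \<inter> z u j = {}"
    and separated: "\<And>v u i j. v \<in> V \<Longrightarrow> u \<in> V \<Longrightarrow> i \<in> L v \<Longrightarrow> j \<in> L u \<Longrightarrow>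
      compat R le (c v) (c u) \<Longrightarrow> Int_of a (z v i) \<inter> Int_of b (z u j) = {}"
  shows "forces_not_nice R le Th a b r"
proof -
  define N where "N i = {(p, z v i) | p v. p \<in> R \<and> le p r \<and> first_candidate R le V c L p i v}" for i
  have N_values: "p \<in> R \<and> le p r \<and> finite x \<and> x \<subseteq> Th" if "(p, x) \<in> N i" for p x i
    using that finite_values unfolding N_def first_candidate_def by blast
  have N_predense: "\<exists>(p, x)\<in>N i. compat R le q p" if iq: "i \<in> Th" "q \<in> R" "le q r" for i q
  proof -
    obtain s v where s: "s \<in> R" "le s q" "first_candidate R le V c L s i v"
      using exists_first_candidate[OF po c iq(2) predense[OF iq]] by blast
    then have "(s, z v i) \<in> N i"
      using po_le_trans[OF po s(1) iq(2) r s(2) iq(3)] unfolding N_def by blast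
    moreover have "compat R le q s"
      using compatI[where le = le, OF s(1) s(2) po_le_refl[OF po s(1)]] .
    ultimately show ?thesis
      by blast
  qed
  have N_coherent: "(i = j \<longrightarrow> x = y) \<and> (i \<noteq> j \<longrightarrow> x \<inter> y = {}) \<and> Int_of a x \<inter> Int_of b y = {}"
    if px: "(p, x) \<in> N i" and qy: "(q, y) \<in> N j" and pq: "compat R le p q" for i j p q x y
  proof -
    obtain v u where v: "x = z v i" "p \<in> R" "first_candidate R le V c L p i v"
      and u: "y = z u j" "q \<in> R" "first_candidate R le V c L q j u"
      using px qy unfolding N_def by blast
    have vu: "v \<in> V" "u \<in> V" "i \<in> L v" "j \<in> L u" "c v \<in> R" "c u \<in> R" "le p (c v)" "le q (c u)"
      using v(3) u(3) c unfolding first_candidate_def by auto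
    obtain s where s: "s \<in> R" "le s p" "le s q"
      using pq unfolding compat_def by blast
    have "compat R le (c v) (c u)"
      using compatI[where le = le, OF s(1) po_le_trans[OF po s(1) v(2) vu(5) s(2) vu(7)]
          po_le_trans[OF po s(1) u(2) vu(6) s(3) vu(8)]] .
    moreover have "v = u" if "i = j"
      using first_candidate_unique[OF po c v(3) _ pq v(2) u(2)] u(3) that by simp
    ultimately show ?thesis
      using disjoint[OF vu(1-4)] separated[OF vu(1-4)] unfolding v(1) u(1) by auto
  qed
  show ?thesis
    unfolding forces_not_nice_def
  proof (intro exI[of _ N] conjI)
    show "\<forall>i\<in>Th. \<forall>(p, x)\<in>N i. p \<in> R \<and> le p r \<and> finite x \<and> x \<subseteq> Th"
      using N_values by auto
    show "\<forall>i\<in>Th. \<forall>q\<in>R. le q r \<longrightarrow> (\<exists>(p, x)\<in>N i. compat R le q p)"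
      using N_predense by blast
    show "\<forall>i\<in>Th. \<forall>j\<in>Th. \<forall>(p, x)\<in>N i. \<forall>(q, y)\<in>N j. compat R le p q \<longrightarrow>
        (i = j \<longrightarrow> x = y) \<and> (i \<noteq> j \<longrightarrow> x \<inter> y = {}) \<and> Int_of a x \<inter> Int_of b y = {}"
      using N_coherent by fast
  qed
qed

section \<open>The poset Q(X, S)\<close>

definition linked :: "('a \<Rightarrow> nat set) \<Rightarrow> ('a \<Rightarrow> nat set) \<Rightarrow> ('a \<Rightarrow> 'a set) \<Rightarrow> ('k \<Rightarrow> 'a set) \<Rightarrow>
    'k \<Rightarrow> 'k \<Rightarrow> bool" where
  "linked a b x S \<alpha> \<beta> \<longleftrightarrow>
     (\<exists>i\<in>S \<alpha>. \<exists>j\<in>S \<beta>. Int_of a (x i) \<inter> Int_of b (x j) \<noteq> {} \<or> Int_of b (x i) \<inter> Int_of a (x j) \<noteq> {})"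

lemma Q_set_linked:
  "Q_set K a b x S = {F. finite F \<and> F \<subseteq> K \<and> (\<forall>\<alpha>\<in>F. \<forall>\<beta>\<in>F. \<alpha> \<noteq> \<beta> \<longrightarrow> linked a b x S \<alpha> \<beta>)}"
  unfolding Q_set_def linked_def ..

lemma linked_sym: "linked a b x S \<alpha> \<beta> \<longleftrightarrow> linked a b x S \<beta> \<alpha>"
  unfolding linked_def by blast

lemma not_linked_if_incompatible:
  assumes "(p, F) \<in> R \<times> Q_set K a b x S" "(q, G) \<in> R \<times> Q_set K a b x S"
    and "\<not> compat (R \<times> Q_set K a b x S) (prod_le le Q_le) (p, F) (q, G)"
    and "compat R le p q"
  shows "\<exists>\<alpha>\<in>F - G. \<exists>\<beta>\<in>G - F. \<not> linked a b x S \<alpha> \<beta>"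
proof -
  obtain s where s: "s \<in> R" "le s p" "le s q"
    using assms(4) unfolding compat_def by blast
  have "F \<union> G \<notin> Q_set K a b x S"
  proof
    assume "F \<union> G \<in> Q_set K a b x S"
    with s have "compat (R \<times> Q_set K a b x S) (prod_le le Q_le) (p, F) (q, G)"
      by (intro compatI[where le = "prod_le le Q_le", of "(s, F \<union> G)"]) (auto simp: prod_le_def Q_le_def)
    with assms(3) show False ..
  qed
  moreover have "finite (F \<union> G)" "F \<union> G \<subseteq> K"
    using assms(1,2) unfolding Q_set_linked by auto
  ultimately obtain \<alpha> \<beta> where \<alpha>\<beta>: "\<alpha> \<in> F \<union> G" "\<beta> \<in> F \<union> G" "\<alpha> \<noteq> \<beta>" "\<not> linked a b x S \<alpha> \<beta>"
    unfolding Q_set_linked by auto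
  moreover have "\<not> (\<alpha> \<in> F \<and> \<beta> \<in> F)" "\<not> (\<alpha> \<in> G \<and> \<beta> \<in> G)"
    using assms(1,2) \<alpha>\<beta>(3,4) unfolding Q_set_linked by auto
  ultimately consider "\<alpha> \<in> F - G" "\<beta> \<in> G - F" | "\<beta> \<in> F - G" "\<alpha> \<in> G - F"
    by auto
  then show ?thesis
    using \<alpha>\<beta>(4) linked_sym[of a b x S \<alpha> \<beta>] by cases auto
qed

lemma antichain_product_not_linked:
  assumes anti: "antichain (R \<times> Q_set K a b x S) (prod_le le Q_le) A"
    and "v \<in> A" "w \<in> A" "v \<noteq> w" "compat R le (fst v) (fst w)"
  shows "\<exists>\<alpha>\<in>snd v - snd w. \<exists>\<beta>\<in>snd w - snd v. \<not> linked a b x S \<alpha> \<beta>"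
proof (rule not_linked_if_incompatible)
  have "A \<subseteq> R \<times> Q_set K a b x S"
    using anti unfolding antichain_def by blast
  then show "(fst v, snd v) \<in> R \<times> Q_set K a b x S" "(fst w, snd w) \<in> R \<times> Q_set K a b x S"
    using assms(2,3) by auto
  show "\<not> compat (R \<times> Q_set K a b x S) (prod_le le Q_le) (fst v, snd v) (fst w, snd w)"
    using anti assms(2-4) unfolding antichain_def by simp
qed (use assms(5) in simp)

lemma card_of_antichain_fixed_snd:
  assumes po: "partial_order_on' R le" and cc: "chain_cond R le K"
    and anti: "antichain (R \<times> Q_set K a b x S) (prod_le le Q_le) A"
  shows "|{v\<in>A. snd v = F}| <o |K|"
proof -
  define Z where "Z = {v\<in>A. snd v = F}"
  have incompat: "\<not> compat R le (fst v) (fst w)" if "v \<in> Z" "w \<in> Z" "v \<noteq> w" for v w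
    using antichain_product_not_linked[OF anti, of v w] that unfolding Z_def by blast
  have "A \<subseteq> R \<times> Q_set K a b x S"
    using anti unfolding antichain_def by blast
  then have "fst ` Z \<subseteq> R"
    unfolding Z_def by auto
  have inj: "inj_on fst Z"
  proof (rule inj_onI)
    fix v w assume "v \<in> Z" "w \<in> Z" "fst v = fst w"
    with \<open>fst ` Z \<subseteq> R\<close> show "v = w"
      using incompat compat_refl[OF po] by (metis image_subset_iff)
  qed
  have "antichain R le (fst ` Z)"
    using incompat \<open>fst ` Z \<subseteq> R\<close> unfolding antichain_def by blast
  from ordIso_ordLess_trans[OF ordIso_symmetric[OF card_of_inj_image[OF inj]]
      cc[unfolded chain_cond_def, rule_format, OF this]]
  show ?thesis
    unfolding Z_def .
qed

lemma antichain_delta_refinement: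
  fixes R :: "'r set" and K :: "'k set"
  assumes po: "partial_order_on' R le" and cc: "chain_cond R le K"
    and stable: "stable |K|" and uncountable: "|UNIV :: nat set| <o |K|"
    and anti: "antichain (R \<times> Q_set K a b x S) (prod_le le Q_le) A" and big: "|K| \<le>o |A|"
  obtains V E where "V \<subseteq> A" "|K| \<le>o |V|" "\<And>v. v \<in> V \<Longrightarrow> E v \<subseteq> K \<and> finite (E v) \<and> E v \<noteq> {}"
    "disjoint_family_on E V"
    "\<And>v w. v \<in> V \<Longrightarrow> w \<in> V \<Longrightarrow> v \<noteq> w \<Longrightarrow> compat R le (fst v) (fst w) \<Longrightarrow>
       \<exists>\<alpha>\<in>E v. \<exists>\<beta>\<in>E w. \<not> linked a b x S \<alpha> \<beta>"
proof -
  have A: "A \<subseteq> R \<times> Q_set K a b x S"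
    using anti unfolding antichain_def by blast
  have fin: "finite (snd v) \<and> snd v \<subseteq> K" if "v \<in> A" for v
  proof -
    have "snd v \<in> Q_set K a b x S"
      using A that by (auto simp: mem_Times_iff)
    then show ?thesis
      unfolding Q_set_def by blast
  qed
  obtain A1 \<rho> where A1: "A1 \<subseteq> A" "|K| \<le>o |A1|"
    and root: "\<And>v w. v \<in> A1 \<Longrightarrow> w \<in> A1 \<Longrightarrow> v \<noteq> w \<Longrightarrow> snd v \<inter> snd w = \<rho>"
    using delta_system[OF stable uncountable big, of snd] fin by blast
  have "infinite K"
    using uncountable infinite_iff_card_of_nat ordLess_imp_ordLeq by auto
  then have "infinite A1"
    using A1(2) card_of_ordLeq_infinite by auto
  have root_sub: "\<rho> \<subseteq> snd v" if "v \<in> A1" for v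
    using delta_root_subset[OF \<open>infinite A1\<close> root that] .
  define Z where "Z = {v\<in>A1. snd v = \<rho>}"
  have "Z \<subseteq> {v\<in>A. snd v = \<rho>}"
    using A1(1) unfolding Z_def by blast
  from ordLeq_ordLess_trans[OF card_of_mono1[OF this] card_of_antichain_fixed_snd[OF po cc anti]]
  have "|Z| <o |K|" .
  define V where "V = A1 - Z"
  have "|K| \<le>o |V|"
    unfolding V_def using card_of_Diff_big[OF \<open>infinite K\<close> A1(2) \<open>|Z| <o |K|\<close>] .
  show thesis
  proof (rule that[of V "\<lambda>v. snd v - \<rho>"])
    show "V \<subseteq> A" "|K| \<le>o |V|"
      using A1(1) \<open>|K| \<le>o |V|\<close> unfolding V_def by auto
    show "snd v - \<rho> \<subseteq> K \<and> finite (snd v - \<rho>) \<and> snd v - \<rho> \<noteq> {}" if "v \<in> V" for v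
    proof -
      have "v \<in> A" "\<rho> \<subseteq> snd v" "snd v \<noteq> \<rho>"
        using that A1(1) root_sub unfolding V_def Z_def by auto
      then show ?thesis
        using fin[of v] by auto
    qed
    show "disjoint_family_on (\<lambda>v. snd v - \<rho>) V"
      using root unfolding disjoint_family_on_def V_def by blast
    show "\<exists>\<alpha>\<in>snd v - \<rho>. \<exists>\<beta>\<in>snd w - \<rho>. \<not> linked a b x S \<alpha> \<beta>"
      if "v \<in> V" "w \<in> V" "v \<noteq> w" "compat R le (fst v) (fst w)" for v w
      using antichain_product_not_linked[OF anti _ _ that(3,4)] that(1,2) A1(1) root_sub
      unfolding V_def by blast
  qed
qed

lemma not_chain_cond_if_unlinked:
  fixes R :: "'r set" and K :: "'k set"
  assumes P: "P ` K \<subseteq> R"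
    and unlinked: "\<And>\<alpha> \<beta>. \<alpha> \<in> K \<Longrightarrow> \<beta> \<in> K \<Longrightarrow> \<alpha> \<noteq> \<beta> \<Longrightarrow> compat R le (P \<alpha>) (P \<beta>) \<Longrightarrow>
      \<not> linked a b x S \<alpha> \<beta>"
  shows "\<not> chain_cond (R \<times> Q_set K a b x S) (prod_le le Q_le) K"
proof
  define A where "A = (\<lambda>\<alpha>. (P \<alpha>, {\<alpha>})) ` K"
  assume cc: "chain_cond (R \<times> Q_set K a b x S) (prod_le le Q_le) K"
  have "antichain (R \<times> Q_set K a b x S) (prod_le le Q_le) A"
    unfolding antichain_def
  proof (intro conjI ballI impI)
    show "A \<subseteq> R \<times> Q_set K a b x S"
      using P unfolding A_def Q_set_linked by auto
    fix u v assume "u \<in> A" "v \<in> A" "u \<noteq> v"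
    then obtain \<alpha> \<beta> where \<alpha>\<beta>: "\<alpha> \<in> K" "\<beta> \<in> K" "\<alpha> \<noteq> \<beta>" "u = (P \<alpha>, {\<alpha>})" "v = (P \<beta>, {\<beta>})"
      unfolding A_def by auto
    show "\<not> compat (R \<times> Q_set K a b x S) (prod_le le Q_le) u v"
    proof
      assume "compat (R \<times> Q_set K a b x S) (prod_le le Q_le) u v"
      then obtain s G where "s \<in> R" "le s (P \<alpha>)" "le s (P \<beta>)" "G \<in> Q_set K a b x S" "\<alpha> \<in> G" "\<beta> \<in> G"
        unfolding compat_def prod_le_def Q_le_def \<alpha>\<beta>(4,5) by auto
      then show False
        using unlinked[OF \<alpha>\<beta>(1-3) compatI[where le = le]] \<alpha>\<beta>(3) unfolding Q_set_linked by blast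
    qed
  qed
  from cc[unfolded chain_cond_def, rule_format, OF this]
  have "|A| <o |K|" .
  moreover have "inj_on (\<lambda>\<alpha>. (P \<alpha>, {\<alpha>})) K"
    by (rule inj_onI) simp
  then have "|K| \<le>o |A|"
    unfolding A_def card_of_ordLeq[symmetric] by blast
  ultimately show False
    using not_ordLess_ordLeq by blast
qed

lemma disj_fin_familyD:
  assumes "disj_fin_family Th y"
  shows "i \<in> Th \<Longrightarrow> finite (y i) \<and> y i \<subseteq> Th"
    and "i \<in> Th \<Longrightarrow> j \<in> Th \<Longrightarrow> i \<noteq> j \<Longrightarrow> y i \<inter> y j = {}"
  using assms unfolding disj_fin_family_def by auto

lemma X_sequenceD:
  assumes "X_sequence Th K thseq a b y T"
  shows "\<alpha> \<in> K \<Longrightarrow> T \<alpha> \<subseteq> Th"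
    and "\<alpha> \<in> K \<Longrightarrow> \<beta> \<in> K \<Longrightarrow> \<alpha> \<noteq> \<beta> \<Longrightarrow> T \<alpha> \<inter> T \<beta> = {}"
    and "\<alpha> \<in> K \<Longrightarrow> |thseq \<alpha>| <o |T \<alpha>|"
    and "\<alpha> \<in> K \<Longrightarrow> i \<in> T \<alpha> \<Longrightarrow> j \<in> T \<alpha> \<Longrightarrow> Int_of a (y i) \<inter> Int_of b (y j) = {}"
  using assms unfolding X_sequence_def by auto

lemma disj_fin_family_restrict:
  fixes Th :: "'a set" and T :: "'k \<Rightarrow> 'a set"
  assumes "\<And>i. i \<in> Th \<Longrightarrow> finite (x i) \<and> x i \<subseteq> Th"
    and disjoint: "\<And>\<alpha> \<beta> i j. \<alpha> \<in> K \<Longrightarrow> \<beta> \<in> K \<Longrightarrow> i \<in> T \<alpha> \<Longrightarrow> j \<in> T \<beta> \<Longrightarrow> i \<noteq> j \<Longrightarrow>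
      x i \<inter> x j = {}"
  shows "disj_fin_family Th (\<lambda>i. if \<exists>\<alpha>\<in>K. i \<in> T \<alpha> then x i else {})"
  unfolding disj_fin_family_def
proof (intro conjI ballI impI)
  fix i assume "i \<in> Th"
  then show "finite (if \<exists>\<alpha>\<in>K. i \<in> T \<alpha> then x i else {})"
    "(if \<exists>\<alpha>\<in>K. i \<in> T \<alpha> then x i else {}) \<subseteq> Th"
    using assms(1) by auto
next
  fix i j :: 'a assume "i \<noteq> j"
  show "(if \<exists>\<alpha>\<in>K. i \<in> T \<alpha> then x i else {}) \<inter> (if \<exists>\<alpha>\<in>K. j \<in> T \<alpha> then x j else {}) = {}"
  proof (cases "(\<exists>\<alpha>\<in>K. i \<in> T \<alpha>) \<and> (\<exists>\<beta>\<in>K. j \<in> T \<beta>)")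
    case True
    then obtain \<alpha> \<beta> where "\<alpha> \<in> K" "i \<in> T \<alpha>" "\<beta> \<in> K" "j \<in> T \<beta>"
      by blast
    with \<open>i \<noteq> j\<close> show ?thesis
      using disjoint[of \<alpha> \<beta> i j] by auto
  qed auto
qed

lemma exists_injections:
  assumes "\<And>v \<alpha>. v \<in> V \<Longrightarrow> \<alpha> \<in> E v \<Longrightarrow> |L v| \<le>o |T \<alpha>|"
  obtains f where "\<forall>v\<in>V. \<forall>\<alpha>\<in>E v. inj_on (f v \<alpha>) (L v) \<and> f v \<alpha> ` L v \<subseteq> T \<alpha>"
proof -
  have "\<forall>v\<alpha>\<in>Sigma V E. \<exists>g. inj_on g (L (fst v\<alpha>)) \<and> g ` L (fst v\<alpha>) \<subseteq> T (snd v\<alpha>)"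
  proof
    fix v\<alpha> assume "v\<alpha> \<in> Sigma V E"
    then have "|L (fst v\<alpha>)| \<le>o |T (snd v\<alpha>)|"
      using assms by auto
    then show "\<exists>g. inj_on g (L (fst v\<alpha>)) \<and> g ` L (fst v\<alpha>) \<subseteq> T (snd v\<alpha>)"
      unfolding card_of_ordLeq[symmetric] .
  qed
  from bchoice[OF this] obtain F
    where "\<forall>v\<alpha>\<in>Sigma V E. inj_on (F v\<alpha>) (L (fst v\<alpha>)) \<and> F v\<alpha> ` L (fst v\<alpha>) \<subseteq> T (snd v\<alpha>)" ..
  then show thesis
    by (intro that[of "\<lambda>v \<alpha>. F (v, \<alpha>)"]) auto
qed

context
  fixes Th :: "'a set" and K :: "'k set" and thseq :: "'k \<Rightarrow> 'a set" and a b :: "'a \<Rightarrow> nat set"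
    and y :: "'a \<Rightarrow> 'a set" and T :: "'k \<Rightarrow> 'a set"
    and V :: "'v set" and E :: "'v \<Rightarrow> 'k set" and L :: "'v \<Rightarrow> 'a set" and f :: "'v \<Rightarrow> 'k \<Rightarrow> 'a \<Rightarrow> 'a"
  assumes Y: "disj_fin_family Th y" and XS: "X_sequence Th K thseq a b y T"
    and E: "\<forall>v\<in>V. E v \<subseteq> K \<and> finite (E v) \<and> E v \<noteq> {}" and E_disjoint: "disjoint_family_on E V"
    and f: "\<forall>v\<in>V. \<forall>\<alpha>\<in>E v. inj_on (f v \<alpha>) (L v) \<and> f v \<alpha> ` L v \<subseteq> T \<alpha>"
begin

lemma spread_value_in:
  assumes "v \<in> V" "\<alpha> \<in> E v" "i \<in> L v"
  shows "f v \<alpha> i \<in> T \<alpha>" "\<alpha> \<in> K" "f v \<alpha> i \<in> Th"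
proof -
  show "f v \<alpha> i \<in> T \<alpha>" "\<alpha> \<in> K"
    using f E assms by auto
  then show "f v \<alpha> i \<in> Th"
    using X_sequenceD(1)[OF XS] by blast
qed

lemma spread_values_finite:
  assumes "v \<in> V" "i \<in> L v"
  shows "finite (\<Union>\<alpha>\<in>E v. y (f v \<alpha> i)) \<and> (\<Union>\<alpha>\<in>E v. y (f v \<alpha> i)) \<subseteq> Th"
proof -
  have "finite (y (f v \<alpha> i)) \<and> y (f v \<alpha> i) \<subseteq> Th" if "\<alpha> \<in> E v" for \<alpha>
    using disj_fin_familyD(1)[OF Y spread_value_in(3)[OF assms(1) that assms(2)]] .
  with E assms(1) show ?thesis
    by blast
qed

lemma spread_values_disjoint:
  assumes vu: "v \<in> V" "u \<in> V" "i \<in> L v" "j \<in> L u" "i \<noteq> j"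
  shows "(\<Union>\<alpha>\<in>E v. y (f v \<alpha> i)) \<inter> (\<Union>\<beta>\<in>E u. y (f u \<beta> j)) = {}"
proof -
  have "y (f v \<alpha> i) \<inter> y (f u \<beta> j) = {}" if \<alpha>\<beta>: "\<alpha> \<in> E v" "\<beta> \<in> E u" for \<alpha> \<beta>
  proof (cases "f v \<alpha> i = f u \<beta> j")
    case True
    note in_T = spread_value_in[OF vu(1) \<alpha>\<beta>(1) vu(3)] spread_value_in[OF vu(2) \<alpha>\<beta>(2) vu(4)]
    have "\<alpha> = \<beta>"
    proof (rule ccontr)
      assume "\<alpha> \<noteq> \<beta>"
      with in_T have "T \<alpha> \<inter> T \<beta> = {}"
        using X_sequenceD(2)[OF XS] by simp
      with True in_T show False
        by auto
    qed
    then have "v = u"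
      using E_disjoint vu(1,2) \<alpha>\<beta> unfolding disjoint_family_on_def by blast
    with True \<open>\<alpha> = \<beta>\<close> have "i = j"
      using inj_onD[OF conjunct1[OF f[rule_format, OF vu(1) \<alpha>\<beta>(1)]] _ vu(3)] vu(4) by simp
    with vu(5) show ?thesis ..
  next
    case False
    then show ?thesis
      using disj_fin_familyD(2)[OF Y] spread_value_in[OF vu(1) \<alpha>\<beta>(1) vu(3)]
        spread_value_in[OF vu(2) \<alpha>\<beta>(2) vu(4)] by blast
  qed
  then show ?thesis
    by blast
qed

lemma spread_values_separated:
  assumes vu: "v \<in> V" "u \<in> V" "i \<in> L v" "j \<in> L u"
    and unlinked: "v \<noteq> u \<Longrightarrow> \<exists>\<alpha>\<in>E v. \<exists>\<beta>\<in>E u. \<not> linked a b y T \<alpha> \<beta>"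
  shows "Int_of a (\<Union>\<alpha>\<in>E v. y (f v \<alpha> i)) \<inter> Int_of b (\<Union>\<beta>\<in>E u. y (f u \<beta> j)) = {}"
proof -
  obtain \<alpha> \<beta> where \<alpha>\<beta>: "\<alpha> \<in> E v" "\<beta> \<in> E u"
    and orth: "Int_of a (y (f v \<alpha> i)) \<inter> Int_of b (y (f u \<beta> j)) = {}"
  proof (cases "v = u")
    case True
    obtain \<alpha> where "\<alpha> \<in> E v"
      using E vu(1) by blast
    with True vu show ?thesis
      using that[of \<alpha> \<alpha>] X_sequenceD(4)[OF XS] spread_value_in by blast
  next
    case False
    then obtain \<alpha> \<beta> where "\<alpha> \<in> E v" "\<beta> \<in> E u" "\<not> linked a b y T \<alpha> \<beta>"
      using unlinked by blast
    then show ?thesis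
      using that[of \<alpha> \<beta>] spread_value_in vu unfolding linked_def by blast
  qed
  have "Int_of a (\<Union>\<alpha>\<in>E v. y (f v \<alpha> i)) \<subseteq> Int_of a (y (f v \<alpha> i))"
    "Int_of b (\<Union>\<beta>\<in>E u. y (f u \<beta> j)) \<subseteq> Int_of b (y (f u \<beta> j))"
    using \<alpha>\<beta> by (auto intro!: Int_of_antimono)
  with orth show ?thesis
    by blast
qed

end

section \<open>A cofinal sequence of cardinals below \<theta>\<close>

locale cofinal_sequence =
  fixes Th :: "'a set" and K :: "'k set" and thseq :: "'k \<Rightarrow> 'a set"
  assumes Th_infinite: "infinite Th"
    and K_cofinality: "is_cofinality Th K"
    and K_uncountable: "|UNIV :: nat set| <o |K|"
    and thseq_less_Th: "\<forall>\<alpha>\<in>K. |thseq \<alpha>| <o |Th|"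
    and thseq_strict_mono: "\<forall>\<alpha>\<in>K. \<forall>\<beta>\<in>K. (\<alpha>, \<beta>) \<in> |K| \<and> \<alpha> \<noteq> \<beta> \<longrightarrow> |thseq \<alpha>| <o |thseq \<beta>|"
    and thseq_cofinal: "\<forall>Z. Z \<subseteq> Th \<and> |Z| <o |Th| \<longrightarrow> (\<exists>\<alpha>\<in>K. |Z| \<le>o |thseq \<alpha>| )"
    and K_less_thseq_least: "\<forall>\<alpha>0\<in>K. (\<forall>\<beta>\<in>K. (\<alpha>0, \<beta>) \<in> |K| ) \<longrightarrow> |K| <o |thseq \<alpha>0|"
begin

lemma K_infinite: "infinite K"
  using K_uncountable infinite_iff_card_of_nat ordLess_imp_ordLeq by auto

lemma K_regular: "regularCard |K|"
  using is_cofinality_regularCard[OF K_cofinality K_infinite] .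

lemma K_stable: "stable |K|"
  using regularCard_stable[OF card_of_Card_order] K_regular K_infinite by (simp add: Field_card_of)

lemma thseq_mono: "\<alpha> \<in> K \<Longrightarrow> \<beta> \<in> K \<Longrightarrow> (\<alpha>, \<beta>) \<in> |K| \<Longrightarrow> |thseq \<alpha>| \<le>o |thseq \<beta>|"
  using thseq_strict_mono ordLess_imp_ordLeq card_of_mono1[of "thseq \<alpha>" "thseq \<alpha>"] by (cases "\<alpha> = \<beta>") auto

lemma K_le_thseq:
  assumes "\<alpha> \<in> K"
  shows "|K| \<le>o |thseq \<alpha>|"
proof -
  define \<alpha>0 where "\<alpha>0 = wo_rel.minim |K| K"
  have min: "\<alpha>0 \<in> K" "\<And>\<beta>. \<beta> \<in> K \<Longrightarrow> (\<alpha>0, \<beta>) \<in> |K|"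
    using card_of_minim[of K K] assms unfolding \<alpha>0_def by auto
  have "|K| <o |thseq \<alpha>0|"
    using K_less_thseq_least[rule_format, OF min] .
  from ordLeq_transitive[OF ordLess_imp_ordLeq[OF this] thseq_mono[OF min(1) assms min(2)[OF assms]]]
  show ?thesis .
qed

lemma thseq_infinite: "\<alpha> \<in> K \<Longrightarrow> infinite (thseq \<alpha>)"
  using card_of_ordLeq_infinite[OF K_le_thseq K_infinite] .

lemma small_le_thseq:
  assumes "|Z| <o |Th|"
  shows "\<exists>\<alpha>\<in>K. |Z| \<le>o |thseq \<alpha>|"
proof -
  obtain f where f: "inj_on f Z" "f ` Z \<subseteq> Th"
    using ordLess_imp_ordLeq[OF assms] card_of_ordLeq[of Z Th] by auto
  have "|f ` Z| =o |Z|"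
    using card_of_inj_image[OF f(1)] .
  then have "|f ` Z| <o |Th|"
    using ordIso_ordLess_trans[OF _ assms] by simp
  then obtain \<alpha> where "\<alpha> \<in> K" "|f ` Z| \<le>o |thseq \<alpha>|"
    using thseq_cofinal f(2) by auto
  with ordIso_ordLeq_trans[OF ordIso_symmetric[OF \<open>|f ` Z| =o |Z|\<close>]] show ?thesis
    by auto
qed

lemma exists_big_fiber:
  assumes "p ` Th \<subseteq> R" "|R| <o |Th|" "\<alpha> \<in> K"
  shows "\<exists>P\<in>R. |thseq \<alpha>| <o |{i\<in>Th. p i = P}|"
proof -
  obtain \<beta> where \<beta>: "\<beta> \<in> K" "|R| \<le>o |thseq \<beta>|"
    using small_le_thseq[OF assms(2)] by auto
  obtain \<gamma> where \<gamma>: "\<gamma> \<in> K" "(\<alpha>, \<gamma>) \<in> |K|" "(\<beta>, \<gamma>) \<in> |K|"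
    using card_of_total[OF assms(3) \<beta>(1)] card_of_refl[OF assms(3)] card_of_refl[OF \<beta>(1)] assms(3) \<beta>(1)
    by blast
  have "|R| \<le>o |thseq \<gamma>|"
    using ordLeq_transitive[OF \<beta>(2) thseq_mono[OF \<beta>(1) \<gamma>(1) \<gamma>(3)]] .
  from card_of_big_fiber[OF thseq_infinite[OF \<gamma>(1)] this thseq_less_Th[rule_format, OF \<gamma>(1)] assms(1)]
  obtain P where "P \<in> R" "|thseq \<gamma>| <o |{i\<in>Th. p i = P}|"
    by auto
  with ordLeq_ordLess_trans[OF thseq_mono[OF assms(3) \<gamma>(1) \<gamma>(2)]] show ?thesis
    by auto
qed

lemma exists_thseq_rank:
  obtains h where "h ` Th \<subseteq> K" "\<And>\<alpha>. \<alpha> \<in> K \<Longrightarrow> |{i\<in>Th. (h i, \<alpha>) \<in> |K|}| \<le>o |thseq \<alpha>|"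
proof -
  obtain lev where lev: "lev ` Th \<subseteq> K" and small: "\<And>d. d \<in> K \<Longrightarrow> |{i\<in>Th. (lev i, d) \<in> |K|}| <o |Th|"
    by (rule exists_small_levels[OF K_cofinality Th_infinite K_infinite]) (rule that)
  define Lv where "Lv d = {i\<in>Th. (lev i, d) \<in> |K|}" for d
  have "\<forall>d\<in>K. \<exists>\<gamma>. \<gamma> \<in> K \<and> |Lv d| \<le>o |thseq \<gamma>|"
  proof
    fix d assume "d \<in> K"
    from small_le_thseq[OF small[OF this]] show "\<exists>\<gamma>. \<gamma> \<in> K \<and> |Lv d| \<le>o |thseq \<gamma>|"
      unfolding Lv_def by auto
  qed
  from bchoice[OF this] obtain \<phi> where \<phi>: "\<forall>d\<in>K. \<phi> d \<in> K \<and> |Lv d| \<le>o |thseq (\<phi> d)|" ..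
  show thesis
  proof (rule that[of "\<lambda>i. \<phi> (lev i)"])
    show "(\<lambda>i. \<phi> (lev i)) ` Th \<subseteq> K"
      using lev \<phi> by auto
  next
    fix \<alpha> assume \<alpha>: "\<alpha> \<in> K"
    define D where "D = {d\<in>K. (\<phi> d, \<alpha>) \<in> |K|}"
    have sub: "{i\<in>Th. (\<phi> (lev i), \<alpha>) \<in> |K|} \<subseteq> (\<Union>d\<in>D. Lv d)"
    proof
      fix i assume i: "i \<in> {i\<in>Th. (\<phi> (lev i), \<alpha>) \<in> |K|}"
      then have "lev i \<in> K"
        using lev by auto
      then show "i \<in> (\<Union>d\<in>D. Lv d)"
        using i card_of_refl[of "lev i" K] unfolding D_def Lv_def by auto
    qed
    have "|\<Union>d\<in>D. Lv d| \<le>o |thseq \<alpha>|"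
    proof (rule card_of_UNION_ordLeq_infinite[OF thseq_infinite[OF \<alpha>]])
      have "D \<subseteq> K"
        unfolding D_def by auto
      from ordLeq_transitive[OF card_of_mono1[OF this] K_le_thseq[OF \<alpha>]]
      show "|D| \<le>o |thseq \<alpha>|" .
      show "\<forall>d\<in>D. |Lv d| \<le>o |thseq \<alpha>|"
      proof
        fix d assume "d \<in> D"
        then have "d \<in> K" "(\<phi> d, \<alpha>) \<in> |K|"
          unfolding D_def by auto
        with \<phi> have "|Lv d| \<le>o |thseq (\<phi> d)|" "|thseq (\<phi> d)| \<le>o |thseq \<alpha>|"
          using thseq_mono[OF _ \<alpha>] by auto
        then show "|Lv d| \<le>o |thseq \<alpha>|"
          by (rule ordLeq_transitive)
      qed
    qed
    with ordLeq_transitive[OF card_of_mono1[OF sub]]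
    show "|{i\<in>Th. (\<phi> (lev i), \<alpha>) \<in> |K|}| \<le>o |thseq \<alpha>|" .
  qed
qed

definition K_suc :: "'k \<Rightarrow> 'k" where
  "K_suc \<alpha> = wo_rel.suc |K| {\<alpha>}"

lemma K_suc:
  assumes "\<alpha> \<in> K"
  shows "K_suc \<alpha> \<in> K" "(\<alpha>, K_suc \<alpha>) \<in> |K|" "\<alpha> \<noteq> K_suc \<alpha>"
    and "\<And>\<beta>. \<beta> \<in> K \<Longrightarrow> (\<alpha>, \<beta>) \<in> |K| \<Longrightarrow> \<alpha> \<noteq> \<beta> \<Longrightarrow> (K_suc \<alpha>, \<beta>) \<in> |K|"
  using card_of_suc[OF K_infinite assms] unfolding K_suc_def by auto

lemma exists_fiber_subsets:
  fixes p :: "'a \<Rightarrow> 'r"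
  assumes p: "p ` Th \<subseteq> R" and R: "|R| <o |Th|"
  obtains P T where "\<forall>\<alpha>\<in>K. P \<alpha> \<in> R \<and> T \<alpha> \<subseteq> {i\<in>Th. p i = P \<alpha>} \<and>
    |thseq \<alpha>| <o |T \<alpha>| \<and> |T \<alpha>| \<le>o |thseq (K_suc \<alpha>)|"
proof -
  have "\<forall>\<alpha>\<in>K. \<exists>P. P \<in> R \<and>
      (\<exists>T. T \<subseteq> {i\<in>Th. p i = P} \<and> |thseq \<alpha>| <o |T| \<and> |T| \<le>o |thseq (K_suc \<alpha>)| )"
  proof
    fix \<alpha> assume \<alpha>: "\<alpha> \<in> K"
    obtain P where P: "P \<in> R" "|thseq \<alpha>| <o |{i\<in>Th. p i = P}|"
      using exists_big_fiber[OF p R \<alpha>] by auto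
    have "|thseq \<alpha>| <o |thseq (K_suc \<alpha>)|"
      using thseq_strict_mono K_suc[OF \<alpha>] \<alpha> by auto
    from exists_subset_card_between[OF this P(2)] P(1)
    show "\<exists>P. P \<in> R \<and> (\<exists>T. T \<subseteq> {i\<in>Th. p i = P} \<and> |thseq \<alpha>| <o |T| \<and> |T| \<le>o |thseq (K_suc \<alpha>)| )"
      by auto
  qed
  from bchoice[OF this] obtain P where "\<forall>\<alpha>\<in>K. P \<alpha> \<in> R \<and>
      (\<exists>T. T \<subseteq> {i\<in>Th. p i = P \<alpha>} \<and> |thseq \<alpha>| <o |T| \<and> |T| \<le>o |thseq (K_suc \<alpha>)| )" ..
  then have "\<forall>\<alpha>\<in>K. \<exists>T. P \<alpha> \<in> R \<and> T \<subseteq> {i\<in>Th. p i = P \<alpha>} \<and> |thseq \<alpha>| <o |T| \<and>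
      |T| \<le>o |thseq (K_suc \<alpha>)|"
    by auto
  from bchoice[OF this] show thesis
    using that by blast
qed

lemma card_of_earlier_values:
  assumes T: "\<And>\<beta>. \<beta> \<in> K \<Longrightarrow> |T \<beta>| \<le>o |thseq (K_suc \<beta>)|"
    and fin: "\<And>\<beta> j. \<beta> \<in> K \<Longrightarrow> j \<in> T \<beta> \<Longrightarrow> finite (x j)" and \<alpha>: "\<alpha> \<in> K"
  shows "|\<Union>\<beta>\<in>{\<beta>\<in>K. (\<beta>, \<alpha>) \<in> |K| \<and> \<beta> \<noteq> \<alpha>}. \<Union>j\<in>T \<beta>. x j| \<le>o |thseq \<alpha>|"
proof (rule card_of_UNION_ordLeq_infinite[OF thseq_infinite[OF \<alpha>]])
  have "{\<beta>\<in>K. (\<beta>, \<alpha>) \<in> |K| \<and> \<beta> \<noteq> \<alpha>} \<subseteq> K"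
    by auto
  from ordLeq_transitive[OF card_of_mono1[OF this] K_le_thseq[OF \<alpha>]]
  show "|{\<beta>\<in>K. (\<beta>, \<alpha>) \<in> |K| \<and> \<beta> \<noteq> \<alpha>}| \<le>o |thseq \<alpha>|" .
  show "\<forall>\<beta>\<in>{\<beta>\<in>K. (\<beta>, \<alpha>) \<in> |K| \<and> \<beta> \<noteq> \<alpha>}. |\<Union>j\<in>T \<beta>. x j| \<le>o |thseq \<alpha>|"
  proof
    fix \<beta> assume "\<beta> \<in> {\<beta>\<in>K. (\<beta>, \<alpha>) \<in> |K| \<and> \<beta> \<noteq> \<alpha>}"
    then have \<beta>: "\<beta> \<in> K" "(\<beta>, \<alpha>) \<in> |K|" "\<beta> \<noteq> \<alpha>"
      by auto
    have "|T \<beta>| \<le>o |thseq \<alpha>|"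
      using ordLeq_transitive[OF T[OF \<beta>(1)] thseq_mono[OF K_suc(1)[OF \<beta>(1)] \<alpha> K_suc(4)[OF \<beta>(1) \<alpha> \<beta>(2) \<beta>(3)]]] .
    then show "|\<Union>j\<in>T \<beta>. x j| \<le>o |thseq \<alpha>|"
    proof (rule card_of_UNION_ordLeq_infinite[OF thseq_infinite[OF \<alpha>]])
      show "\<forall>j\<in>T \<beta>. |x j| \<le>o |thseq \<alpha>|"
        using fin[OF \<beta>(1)] ordLess_imp_ordLeq[OF finite_card_of_ordLess_infinite[OF _ thseq_infinite[OF \<alpha>]]]
        by auto
    qed
  qed
qed

lemma exists_disjoint_fiber_sequence:
  fixes p :: "'a \<Rightarrow> 'r" and x :: "'a \<Rightarrow> 'b set"
  assumes p: "p ` Th \<subseteq> R" and R: "|R| <o |Th|" and fin: "\<And>i. i \<in> Th \<Longrightarrow> finite (x i)"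
    and fiber_disjoint: "\<And>i j. i \<in> Th \<Longrightarrow> j \<in> Th \<Longrightarrow> i \<noteq> j \<Longrightarrow> p i = p j \<Longrightarrow> x i \<inter> x j = {}"
  obtains P T where "\<And>\<alpha>. \<alpha> \<in> K \<Longrightarrow> P \<alpha> \<in> R \<and> T \<alpha> \<subseteq> {i\<in>Th. p i = P \<alpha>} \<and> |thseq \<alpha>| <o |T \<alpha>|"
    and "\<And>\<alpha> \<beta> i j. \<alpha> \<in> K \<Longrightarrow> \<beta> \<in> K \<Longrightarrow> i \<in> T \<alpha> \<Longrightarrow> j \<in> T \<beta> \<Longrightarrow> \<alpha> \<noteq> \<beta> \<or> i \<noteq> j \<Longrightarrow>
      x i \<inter> x j = {}"
proof -
  obtain P T' where PT': "\<forall>\<alpha>\<in>K. P \<alpha> \<in> R \<and> T' \<alpha> \<subseteq> {i\<in>Th. p i = P \<alpha>} \<and>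
      |thseq \<alpha>| <o |T' \<alpha>| \<and> |T' \<alpha>| \<le>o |thseq (K_suc \<alpha>)|"
    by (rule exists_fiber_subsets[OF p R])
  define U where "U \<alpha> = (\<Union>\<beta>\<in>{\<beta>\<in>K. (\<beta>, \<alpha>) \<in> |K| \<and> \<beta> \<noteq> \<alpha>}. \<Union>j\<in>T' \<beta>. x j)" for \<alpha>
  have U_small: "|U \<alpha>| \<le>o |thseq \<alpha>|" if "\<alpha> \<in> K" for \<alpha>
    unfolding U_def by (rule card_of_earlier_values[OF _ _ that]) (use PT' fin in auto)
  \<comment> \<open>Only \<open>\<theta>\<^sub>\<alpha>\<close> indices meet earlier blocks, since \<open>|T' \<beta>| \<le> \<theta>\<^bsub>\<beta>+1\<^esub> \<le> \<theta>\<^sub>\<alpha>\<close> for \<open>\<beta> < \<alpha>\<close>.\<close>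
  define T where "T \<alpha> = {i\<in>T' \<alpha>. x i \<inter> U \<alpha> = {}}" for \<alpha>
  have T'_disjoint: "disjoint_family_on x (T' \<alpha>)" if "\<alpha> \<in> K" for \<alpha>
    unfolding disjoint_family_on_def
  proof (intro ballI impI)
    fix i j assume "i \<in> T' \<alpha>" "j \<in> T' \<alpha>" "i \<noteq> j"
    moreover have "T' \<alpha> \<subseteq> {i\<in>Th. p i = P \<alpha>}"
      using PT' that by auto
    ultimately have "i \<in> Th" "j \<in> Th" "p i = P \<alpha>" "p j = P \<alpha>"
      by (auto dest: subsetD)
    with \<open>i \<noteq> j\<close> show "x i \<inter> x j = {}"
      using fiber_disjoint[of i j] by simp
  qed
  have T_big: "|thseq \<alpha>| <o |T \<alpha>|" if \<alpha>: "\<alpha> \<in> K" for \<alpha>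
    unfolding T_def
  proof (rule card_of_disjoint_family_avoiding[OF thseq_infinite[OF \<alpha>] U_small[OF \<alpha>]])
    show "|thseq \<alpha>| <o |T' \<alpha>|"
      using PT'[rule_format, OF \<alpha>] by auto
  qed (rule T'_disjoint[OF \<alpha>])
  show thesis
  proof (rule that[of P T])
    show "P \<alpha> \<in> R \<and> T \<alpha> \<subseteq> {i\<in>Th. p i = P \<alpha>} \<and> |thseq \<alpha>| <o |T \<alpha>|" if "\<alpha> \<in> K" for \<alpha>
      using PT'[rule_format, OF that] T_big[OF that] unfolding T_def by auto
  next
    fix \<alpha> \<beta> i j
    assume ij: "\<alpha> \<in> K" "\<beta> \<in> K" "i \<in> T \<alpha>" "j \<in> T \<beta>" "\<alpha> \<noteq> \<beta> \<or> i \<noteq> j"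
    have earlier: "x i \<inter> x j = {}" if "(\<beta>, \<alpha>) \<in> |K|" "\<beta> \<noteq> \<alpha>" "i \<in> T \<alpha>" "j \<in> T \<beta>" "\<beta> \<in> K"
      for \<alpha> \<beta> i j
      using that unfolding T_def U_def by blast
    show "x i \<inter> x j = {}"
    proof (cases "\<alpha> = \<beta>")
      case True
      then show ?thesis
        using ij T'_disjoint[OF ij(1)] unfolding T_def disjoint_family_on_def by auto
    next
      case False
      then show ?thesis
        using card_of_total[OF ij(1,2)] earlier[of \<beta> \<alpha> i j] earlier[of \<alpha> \<beta> j i] ij by blast
    qed
  qed
qed

lemma exists_X_sequence_of_decided_values:
  fixes R :: "'r set" and p :: "'a \<Rightarrow> 'r" and x :: "'a \<Rightarrow> 'a set"
  assumes po: "partial_order_on' R le" and R: "|R| <o |Th|"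
    and px: "\<And>i. i \<in> Th \<Longrightarrow> p i \<in> R \<and> finite (x i) \<and> x i \<subseteq> Th"
    and decided: "\<And>i j. i \<in> Th \<Longrightarrow> j \<in> Th \<Longrightarrow> compat R le (p i) (p j) \<Longrightarrow>
      (i \<noteq> j \<longrightarrow> x i \<inter> x j = {}) \<and> Int_of a (x i) \<inter> Int_of b (x j) = {}"
  obtains y T P where "disj_fin_family Th y" "X_sequence Th K thseq a b y T" "P ` K \<subseteq> R"
    "\<And>\<alpha> \<beta>. \<alpha> \<in> K \<Longrightarrow> \<beta> \<in> K \<Longrightarrow> \<alpha> \<noteq> \<beta> \<Longrightarrow> compat R le (P \<alpha>) (P \<beta>) \<Longrightarrow> \<not> linked a b y T \<alpha> \<beta>"
proof -
  have x_nonempty: "x i \<noteq> {}" if "i \<in> Th" for i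
    using decided[OF that that compat_refl[OF po]] px[OF that] by (auto simp: Int_of_empty)
  have p_R: "p ` Th \<subseteq> R"
    using px by auto
  obtain P T where PT: "\<And>\<alpha>. \<alpha> \<in> K \<Longrightarrow> P \<alpha> \<in> R \<and> T \<alpha> \<subseteq> {i\<in>Th. p i = P \<alpha>} \<and> |thseq \<alpha>| <o |T \<alpha>|"
    and disjoint: "\<And>\<alpha> \<beta> i j. \<alpha> \<in> K \<Longrightarrow> \<beta> \<in> K \<Longrightarrow> i \<in> T \<alpha> \<Longrightarrow> j \<in> T \<beta> \<Longrightarrow> \<alpha> \<noteq> \<beta> \<or> i \<noteq> j \<Longrightarrow>
      x i \<inter> x j = {}"
  proof (rule exists_disjoint_fiber_sequence[OF p_R R])
    show "finite (x i)" if "i \<in> Th" for i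
      using px that by auto
    show "x i \<inter> x j = {}" if "i \<in> Th" "j \<in> Th" "i \<noteq> j" "p i = p j" for i j
      using decided[OF that(1,2)] compat_refl[OF po] px that by auto
  qed (rule that)
  have T_fiber: "i \<in> Th \<and> p i = P \<alpha>" if "\<alpha> \<in> K" "i \<in> T \<alpha>" for \<alpha> i
    using PT[OF that(1)] that(2) by auto
  define y where "y i = (if \<exists>\<alpha>\<in>K. i \<in> T \<alpha> then x i else {})" for i
  have y: "y i = x i" if "\<alpha> \<in> K" "i \<in> T \<alpha>" for \<alpha> i
    using that unfolding y_def by auto
  have orth: "Int_of a (y i) \<inter> Int_of b (y j) = {}"
    if "\<alpha> \<in> K" "\<beta> \<in> K" "i \<in> T \<alpha>" "j \<in> T \<beta>" "compat R le (P \<alpha>) (P \<beta>)" for \<alpha> \<beta> i j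
    using decided[of i j] T_fiber[OF that(1,3)] T_fiber[OF that(2,4)] y[OF that(1,3)] y[OF that(2,4)] that(5)
    by auto
  show thesis
  proof (rule that[of y T P])
    show "disj_fin_family Th y"
      unfolding y_def by (rule disj_fin_family_restrict) (use px disjoint in auto)
    show "X_sequence Th K thseq a b y T"
      unfolding X_sequence_def
    proof (intro conjI ballI impI)
      fix \<alpha> assume "\<alpha> \<in> K"
      then show "T \<alpha> \<subseteq> Th" "|thseq \<alpha>| <o |T \<alpha>|"
        using PT by auto
    next
      fix \<alpha> \<beta> assume "\<alpha> \<in> K" "\<beta> \<in> K" "\<alpha> \<noteq> \<beta>"
      then show "T \<alpha> \<inter> T \<beta> = {}"
        using disjoint[of \<alpha> \<beta>] x_nonempty T_fiber by blast
    next
      fix \<alpha> i j assume "\<alpha> \<in> K" "i \<in> T \<alpha>" "j \<in> T \<alpha>"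
      then show "Int_of a (y i) \<inter> Int_of b (y j) = {}"
        using orth compat_refl[OF po] PT by blast
    qed
    show "P ` K \<subseteq> R"
      using PT by auto
    show "\<not> linked a b y T \<alpha> \<beta>" if "\<alpha> \<in> K" "\<beta> \<in> K" "\<alpha> \<noteq> \<beta>" "compat R le (P \<alpha>) (P \<beta>)" for \<alpha> \<beta>
      using orth[OF that(1,2) _ _ that(4)] orth[OF that(2,1) _ _ compat_sym[OF that(4)]]
      unfolding linked_def by (auto simp: Int_commute)
  qed
qed

lemma dangerous_imp_not_chain_cond:
  fixes R :: "'r set"
  assumes po: "partial_order_on' R le" and R: "|R| <o |Th|" and "dangerous R le Th a b"
  shows "\<exists>y T. disj_fin_family Th y \<and> X_sequence Th K thseq a b y T \<and>
    \<not> chain_cond (R \<times> Q_set K a b y T) (prod_le le Q_le) K"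
proof -
  obtain r where r: "r \<in> R" "forces_not_nice R le Th a b r"
    using assms(3) unfolding dangerous_def by blast
  obtain p x where px: "\<And>i. i \<in> Th \<Longrightarrow> p i \<in> R \<and> finite (x i) \<and> x i \<subseteq> Th"
    and decided: "\<And>i j. i \<in> Th \<Longrightarrow> j \<in> Th \<Longrightarrow> compat R le (p i) (p j) \<Longrightarrow>
      (i \<noteq> j \<longrightarrow> x i \<inter> x j = {}) \<and> Int_of a (x i) \<inter> Int_of b (x j) = {}"
    by (rule forces_not_nice_decided_values[OF po r]) (rule that)
  obtain y T P where "disj_fin_family Th y" "X_sequence Th K thseq a b y T" "P ` K \<subseteq> R"
    and "\<And>\<alpha> \<beta>. \<alpha> \<in> K \<Longrightarrow> \<beta> \<in> K \<Longrightarrow> \<alpha> \<noteq> \<beta> \<Longrightarrow> compat R le (P \<alpha>) (P \<beta>) \<Longrightarrow> \<not> linked a b y T \<alpha> \<beta>"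
  proof (rule exists_X_sequence_of_decided_values[OF po R])
    show "p i \<in> R \<and> finite (x i) \<and> x i \<subseteq> Th" if "i \<in> Th" for i
      using px that .
    show "(i \<noteq> j \<longrightarrow> x i \<inter> x j = {}) \<and> Int_of a (x i) \<inter> Int_of b (x j) = {}"
      if "i \<in> Th" "j \<in> Th" "compat R le (p i) (p j)" for i j
      using decided that .
  qed (rule that)
  with not_chain_cond_if_unlinked show ?thesis
    by blast
qed

lemma not_chain_cond_imp_dangerous:
  fixes R :: "'r set"
  assumes po: "partial_order_on' R le" and cc: "chain_cond R le K"
    and Y: "disj_fin_family Th y" and XS: "X_sequence Th K thseq a b y T"
    and "\<not> chain_cond (R \<times> Q_set K a b y T) (prod_le le Q_le) K"
  shows "dangerous R le Th a b"
proof -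
  obtain A where anti: "antichain (R \<times> Q_set K a b y T) (prod_le le Q_le) A" and A: "|K| \<le>o |A|"
    using assms(5) not_card_of_ordLess unfolding chain_cond_def by auto
  obtain V E where V: "V \<subseteq> A" "|K| \<le>o |V|"
    and E: "\<And>v. v \<in> V \<Longrightarrow> E v \<subseteq> K \<and> finite (E v) \<and> E v \<noteq> {}" and E_disjoint: "disjoint_family_on E V"
    and unlinked: "\<And>v w. v \<in> V \<Longrightarrow> w \<in> V \<Longrightarrow> v \<noteq> w \<Longrightarrow> compat R le (fst v) (fst w) \<Longrightarrow>
      \<exists>\<alpha>\<in>E v. \<exists>\<beta>\<in>E w. \<not> linked a b y T \<alpha> \<beta>"
    by (rule antichain_delta_refinement[OF po cc K_stable K_uncountable anti A]) (rule that)
  obtain h where h: "h ` Th \<subseteq> K" "\<And>\<alpha>. \<alpha> \<in> K \<Longrightarrow> |{i\<in>Th. (h i, \<alpha>) \<in> |K|}| \<le>o |thseq \<alpha>|"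
    by (rule exists_thseq_rank) (rule that)
  define L where "L v = {i\<in>Th. \<forall>\<alpha>\<in>E v. (h i, \<alpha>) \<in> |K|}" for v
  have E': "\<forall>v\<in>V. E v \<subseteq> K \<and> finite (E v) \<and> E v \<noteq> {}"
    using E by blast
  obtain f where f: "\<forall>v\<in>V. \<forall>\<alpha>\<in>E v. inj_on (f v \<alpha>) (L v) \<and> f v \<alpha> ` L v \<subseteq> T \<alpha>"
  proof (rule exists_injections)
    show "|L v| \<le>o |T \<alpha>|" if "v \<in> V" "\<alpha> \<in> E v" for v \<alpha>
    proof -
      have "\<alpha> \<in> K" "L v \<subseteq> {i\<in>Th. (h i, \<alpha>) \<in> |K|}"
        using E[OF that(1)] that(2) unfolding L_def by auto
      from ordLeq_transitive[OF card_of_mono1[OF this(2)]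
          ordLeq_transitive[OF h(2)[OF this(1)] ordLess_imp_ordLeq[OF X_sequenceD(3)[OF XS this(1)]]]]
      show ?thesis .
    qed
  qed
  have fst_V: "fst ` V \<subseteq> R"
    using V(1) anti unfolding antichain_def by auto
  obtain r where r: "r \<in> R"
    and generic: "\<forall>q\<in>R. le q r \<longrightarrow> (\<forall>\<gamma>\<in>K. \<exists>v\<in>V. (\<forall>\<alpha>\<in>E v. (\<gamma>, \<alpha>) \<in> |K| ) \<and> compat R le q (fst v))"
    using exists_condition_meeting_cofinally[OF po cc K_regular K_infinite V(2) fst_V] E E_disjoint by blast
  have "forces_not_nice R le Th a b r"
  proof (rule forces_not_nice_intro[OF po r fst_V])
    fix i q assume "i \<in> Th" "q \<in> R" "le q r"
    with h(1) generic show "\<exists>v\<in>V. i \<in> L v \<and> compat R le q (fst v)"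
      unfolding L_def by blast
  next
    fix v u i j assume vu: "v \<in> V" "u \<in> V" "i \<in> L v" "j \<in> L u"
    show "finite (\<Union>\<alpha>\<in>E v. y (f v \<alpha> i)) \<and> (\<Union>\<alpha>\<in>E v. y (f v \<alpha> i)) \<subseteq> Th"
      using spread_values_finite[OF Y XS E' E_disjoint f vu(1,3)] .
    show "(\<Union>\<alpha>\<in>E v. y (f v \<alpha> i)) \<inter> (\<Union>\<beta>\<in>E u. y (f u \<beta> j)) = {}" if "i \<noteq> j"
      using spread_values_disjoint[OF Y XS E' E_disjoint f vu that] .
    show "Int_of a (\<Union>\<alpha>\<in>E v. y (f v \<alpha> i)) \<inter> Int_of b (\<Union>\<beta>\<in>E u. y (f u \<beta> j)) = {}"
      if "compat R le (fst v) (fst u)"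
      using spread_values_separated[OF Y XS E' E_disjoint f vu unlinked[OF vu(1,2) _ that]] .
  qed
  with r show ?thesis
    unfolding dangerous_def by blast
qed


end

theorem lemma2:
  fixes Th :: "'a set" and K :: "'k set" and thseq :: "'k \<Rightarrow> 'a set"
    and a b :: "'a \<Rightarrow> nat set" and R :: "'r set" and le :: "'r \<Rightarrow> 'r \<Rightarrow> bool"
  assumes theta_inf: "infinite Th"
    and kappa_cf: "is_cofinality Th K"
    and singular: "card_lt K Th"
    and uncountable_cf: "card_lt (UNIV :: nat set) K"
    and thseq_below: "\<forall>\<alpha>\<in>K. card_lt (thseq \<alpha>) Th"
    and thseq_incr: "\<forall>\<alpha>\<in>K. \<forall>\<beta>\<in>K. (\<alpha>, \<beta>) \<in> BNF_Cardinal_Order_Relation.card_of K \<and> \<alpha> \<noteq> \<beta> \<longrightarrow>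
                        card_lt (thseq \<alpha>) (thseq \<beta>)"
    and thseq_conv: "\<forall>Z. Z \<subseteq> Th \<and> card_lt Z Th \<longrightarrow> (\<exists>\<alpha>\<in>K. card_le Z (thseq \<alpha>))"
    and thseq_0: "\<forall>\<alpha>0\<in>K. (\<forall>\<beta>\<in>K. (\<alpha>0, \<beta>) \<in> BNF_Cardinal_Order_Relation.card_of K) \<longrightarrow> card_lt K (thseq \<alpha>0)"
    and pair: "theta_pair Th a b"
    and is_nice: "nice Th a b"
    and R_po: "partial_order_on' R le"
    and R_cc: "chain_cond R le K"
    and R_small: "card_lt R Th"
  shows "dangerous R le Th a b \<longleftrightarrow>
    (\<exists>y T. disj_fin_family Th y \<and> X_sequence Th K thseq a b y T \<and>
       \<not> chain_cond (R \<times> Q_set K a b y T) (prod_le le Q_le) K)"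
proof -
  interpret cofinal_sequence Th K thseq
    by (rule cofinal_sequence.intro) (fact theta_inf kappa_cf uncountable_cf thseq_below thseq_incr thseq_conv thseq_0)+
  show ?thesis
    using dangerous_imp_not_chain_cond[OF R_po R_small] not_chain_cond_imp_dangerous[OF R_po R_cc]
    by blast
qed

end
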